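(* Let $\phi:D_{\mathbb R^m}[0,T]\to[0,\infty)$ be measurable (with $D_{\mathbb R^m}[0,T]$ the Skorokhod space of càdlàg paths, and $R$, $I$ regarded as random elements of it). Then for every $k\in\mathbb Z_+^m$ and $z_0\in\mathbb Z_+^{n}$ for which the conditioning events below have positive $P_0$-probability, \[ \mathbb E_0[\phi(R)\mid R(T)=k,\,Z_0=z_0,\,O]=\mathbb E_0[\phi(I)\mid I(T)=k,\,\tilde Z_0=z_0,\,O]. \]
   Context: Fix integers $n_1,n_2,m_1,m_2\ge 0$ with $n=n_1+n_2$, $m=m_1+m_2$ and $n_2=m_2$, a time $T>0$, and an observation $y\in\mathbb Z_+^{n_2}$. Let $\nu\in\mathbb Z^{n\times m}$; let $\nu'$ be its first $n_1$ rows and $\nu''$ its last $n_2$ rows, and assume $\nu''=[A\;B]$ with $A\in\mathbb Z^{n_2\times m_1}$ and $B\in\mathbb Z^{m_2\times m_2}$ invertible. For $\Delta y\in\mathbb Z^{n_2}$ and $k'\in\mathbb Z_+^{m_1}$ put $G(\Delta y,k')=B^{-1}(\Delta y-Ak')$ and $S_{\Delta y}=\{k'\in\mathbb Z_+^{m_1}: G(\Delta y,k')\in\mathbb Z_+^{m_2}\}$. Let $\lambda=(\lambda',\lambda''):[0,T]\times\mathbb Z_+^{n}\times\mathbb Z_+^{n_2}\to(0,\infty)^m$ be strictly positive, measurable and integrable in $t$, with $\lambda'$ its first $m_1$ and $\lambda''$ its last $m_2$ components; let $\mu$ be a probability measure on $\mathbb Z_+^n$. An $m$-variate Poisson random variable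 (resp. inhomogeneous Poisson process) with vector mean (resp. intensity) has independent components with the corresponding component means (intensities). For $(x_0,y_0)\in\mathbb Z_+^n$, $\rho(\cdot,x_0,y_0,y)$ denotes the p.m.f. on $\mathbb Z_+^{m_2}$ of an $m_2$-variate Poisson random variable with mean $\int_0^T\lambda''(t,(x_0,y_0),y)\,dt$. Lab process: on a probability space $(\Omega,\mathcal F,P_0)$ let $Z_0=(X_0,Y_0)$ take values in $\mathbb Z_+^{n_1}\times\mathbb Z_+^{n_2}$, let $R=(R',R'')$ ($R'$ with $m_1$, $R''$ with $m_2$ components) be a càdlàg $m$-variate counting process on $[0,T]$ with $R(0)=0$, and set $Z(t)=(X(t),Y(t))=Z_0+\nu R(t)$, so $Y(t)=Y_0+\nu''R(t)$. Let $O_p\in\mathcal F$ with $P_0(O_p)>0$. Under $P_0$: conditioned on $O_p$, $Z_0$ has law $\mu$; conditioned on $O_p\cap\{Z_0=z_0\}$, $R$ is an $m$-variate inhomogeneous Poisson process with intensity $t\mapsto\lambda(t,z_0,y)$. Let $O_y=\{Y(T)=y\}$, $O=O_p\cap O_y$, and assume $P_0(O)>0$. Filter variables: let $(U_{0,i},V_{0,i},K'_i)_{i\in\mathbb N}$ be random variables in $\mathbb Z_+^{n_1}\times\mathbb Z_+^{n_2}\times\mathbb Z_+^{m_1}$ such that, under $P_0$ conditioned on $O_p$, these triples are i.i.d. and independent of $(Z_0,R)$, $(U_{0,i},V_{0,i})$ has law $\mu$, and conditioned additionally on $(U_{0,i},V_{0,i})=(x_0,y_0)$, $K'_i$ is $m_1$-variate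 Poisson with mean $\int_0^T\lambda'(t,(x_0,y_0),y)\,dt$. Let $N=\min\{i\in\mathbb N: K'_i\in S_{y-V_{0,i}}\}$ (finite $P_0$-a.s.), and define $K'=K'_N$, $U_0=U_{0,N}$, $V_0=V_{0,N}$, $\tilde Z_0=(U_0,V_0)$, $K''=G(y-V_0,K')$, $K=(K',K'')$, and $W=\rho(K'',U_0,V_0,y)$. Interpolated filter process: let $\zeta^i_l$ ($i=1,\dots,m$, $l\in\mathbb N$) be i.i.d. uniform on $[0,1]$ and, given $O_p$, independent of $Z_0,R$ and of all filter variables above. For $z_0\in\mathbb Z_+^n$ let $\eta_i(t;z_0)=\int_0^t\lambda_i(s,z_0,y)\,ds$ (strictly increasing in $t$). Set $t^i_l=\eta_i^{-1}\big(\zeta^i_l\,\eta_i(T;\tilde Z_0);\tilde Z_0\big)$, $I_i(t)=\sum_{l=1}^{K_i}1_{[t^i_l,\infty)}(t)$ for $t\in[0,T]$, $I=(I_1,\dots,I_m)$ (so $I(T)=K$), and $\tilde Z(t)=\tilde Z_0+\nu I(t)$. $R$ denotes also its restriction to $[0,T]$. *)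

theory Defs
  imports "HOL-Probability.Probability"
begin

(* Vectors in Z_+^d (resp. Z^d, R^d) are functions on nat that vanish at indices >= d. *)
definition vecs :: "nat \<Rightarrow> (nat \<Rightarrow> 'b::zero) set" where
  "vecs d = {x. \<forall>i\<ge>d. x i = 0}"

definition poisson_prob :: "real \<Rightarrow> nat \<Rightarrow> real" where
  "poisson_prob r j = exp (- r) * r ^ j / fact j"

(* Path space on [0,T] with values in R^m, with the sigma-algebra generated by
   the evaluation maps (whose trace on D_{R^m}[0,T] is the Skorokhod Borel sigma-algebra). *)
definition path_space :: "nat \<Rightarrow> real \<Rightarrow> (real \<Rightarrow> nat \<Rightarrow> real) measure" where
  "path_space m T = PiM {0..T} (\<lambda>_. PiM {..<m} (\<lambda>_. borel))"

definition as_path :: "nat \<Rightarrow> real \<Rightarrow> (real \<Rightarrow> nat \<Rightarrow> nat) \<Rightarrow> real \<Rightarrow> nat \<Rightarrow> real" where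
  "as_path m T p = (\<lambda>t\<in>{0..T}. \<lambda>i\<in>{..<m}. real (p t i))"

definition counting_path :: "nat \<Rightarrow> real \<Rightarrow> (real \<Rightarrow> nat \<Rightarrow> nat) \<Rightarrow> bool" where
  "counting_path m T p \<longleftrightarrow> p 0 = (\<lambda>_. 0) \<and> (\<forall>t\<in>{0..T}. p t \<in> vecs m) \<and>
     (\<forall>i<m. mono_on {0..T} (\<lambda>t. p t i)) \<and>
     (\<forall>i<m. \<forall>t\<in>{0..<T}. \<exists>e>0. \<forall>s\<in>{t..<t+e}. p s i = p t i)"

(* Conditioned on the event E (under P), X is an m-variate inhomogeneous Poisson process
   on [0,T] with intensity (lam 0, ..., lam (m-1)): independent components with
   independent Poisson increments with means the integrated intensities. *)
definition cond_poisson_process ::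
  "'a measure \<Rightarrow> 'a set \<Rightarrow> ('a \<Rightarrow> real \<Rightarrow> nat \<Rightarrow> nat) \<Rightarrow> nat \<Rightarrow> real \<Rightarrow> (nat \<Rightarrow> real \<Rightarrow> real) \<Rightarrow> bool"
where
  "cond_poisson_process P E X m T lam \<longleftrightarrow>
     (\<forall>(r::nat) (ts::nat \<Rightarrow> real) (a::nat \<Rightarrow> nat \<Rightarrow> nat).
        ts 0 = 0 \<longrightarrow> (\<forall>j<r. ts j \<le> ts (Suc j)) \<longrightarrow> ts r \<le> T \<longrightarrow>
        measure P (E \<inter> {\<omega>\<in>space P. \<forall>i<m. \<forall>j<r. X \<omega> (ts (Suc j)) i = X \<omega> (ts j) i + a i j})
        = measure P E * (\<Prod>i<m. \<Prod>j<r. poisson_prob (LINT u:{ts j..ts (Suc j)}|lborel. lam i u) (a i j)))"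

(* B = last n2 rows, last m2 columns of nu; invertible as a real matrix *)
definition block_invertible :: "nat \<Rightarrow> nat \<Rightarrow> nat \<Rightarrow> (nat \<Rightarrow> nat \<Rightarrow> int) \<Rightarrow> bool" where
  "block_invertible n1 m1 m2 \<nu> \<longleftrightarrow>
     (\<forall>v::nat \<Rightarrow> real. \<exists>!x::nat \<Rightarrow> real. x \<in> vecs m2 \<and>
        (\<forall>i<m2. (\<Sum>j<m2. real_of_int (\<nu> (n1+i) (m1+j)) * x j) = v i))"

(* G(dy,k') = B^{-1}(dy - A k') *)
definition Gvec :: "nat \<Rightarrow> nat \<Rightarrow> nat \<Rightarrow> (nat \<Rightarrow> nat \<Rightarrow> int) \<Rightarrow> (nat \<Rightarrow> int) \<Rightarrow> (nat \<Rightarrow> nat) \<Rightarrow> nat \<Rightarrow> real" where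
  "Gvec n1 m1 m2 \<nu> dy k' = (THE x. x \<in> vecs m2 \<and>
     (\<forall>i<m2. (\<Sum>j<m2. real_of_int (\<nu> (n1+i) (m1+j)) * x j)
              = real_of_int (dy i) - (\<Sum>j<m1. real_of_int (\<nu> (n1+i) j) * real (k' j))))"

definition Sset :: "nat \<Rightarrow> nat \<Rightarrow> nat \<Rightarrow> (nat \<Rightarrow> nat \<Rightarrow> int) \<Rightarrow> (nat \<Rightarrow> int) \<Rightarrow> (nat \<Rightarrow> nat) set" where
  "Sset n1 m1 m2 \<nu> dy = {k'. k' \<in> vecs m1 \<and> (\<forall>i<m2. Gvec n1 m1 m2 \<nu> dy k' i \<in> \<nat>)}"

(* y - V_0 where z = (U_0, V_0) *)
definition obs_gap :: "nat \<Rightarrow> (nat \<Rightarrow> nat) \<Rightarrow> (nat \<Rightarrow> nat) \<Rightarrow> nat \<Rightarrow> int" where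
  "obs_gap n1 y z = (\<lambda>j. int (y j) - int (z (n1 + j)))"

(* O_y = {Y(T) = y} where Y(T) = Y_0 + nu'' R(T) *)
definition obs_event :: "'a measure \<Rightarrow> nat \<Rightarrow> nat \<Rightarrow> nat \<Rightarrow> (nat \<Rightarrow> nat \<Rightarrow> int) \<Rightarrow> (nat \<Rightarrow> nat) \<Rightarrow> ('a \<Rightarrow> nat \<Rightarrow> nat)
    \<Rightarrow> ('a \<Rightarrow> real \<Rightarrow> nat \<Rightarrow> nat) \<Rightarrow> real \<Rightarrow> 'a set" where
  "obs_event P n1 n2 m \<nu> y Z0 R T = {\<omega>\<in>space P. \<forall>i<n2.
      int (Z0 \<omega> (n1+i)) + (\<Sum>j<m. \<nu> (n1+i) j * int (R \<omega> T j)) = int (y i)}"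

definition sel_index :: "nat \<Rightarrow> nat \<Rightarrow> nat \<Rightarrow> (nat \<Rightarrow> nat \<Rightarrow> int) \<Rightarrow> (nat \<Rightarrow> nat)
    \<Rightarrow> (nat \<Rightarrow> 'a \<Rightarrow> nat \<Rightarrow> nat) \<Rightarrow> (nat \<Rightarrow> 'a \<Rightarrow> nat \<Rightarrow> nat) \<Rightarrow> 'a \<Rightarrow> nat" where
  "sel_index n1 m1 m2 \<nu> y Zf Kp \<omega> = (LEAST i. Kp i \<omega> \<in> Sset n1 m1 m2 \<nu> (obs_gap n1 y (Zf i \<omega>)))"

definition Ztil0 :: "nat \<Rightarrow> nat \<Rightarrow> nat \<Rightarrow> (nat \<Rightarrow> nat \<Rightarrow> int) \<Rightarrow> (nat \<Rightarrow> nat)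
    \<Rightarrow> (nat \<Rightarrow> 'a \<Rightarrow> nat \<Rightarrow> nat) \<Rightarrow> (nat \<Rightarrow> 'a \<Rightarrow> nat \<Rightarrow> nat) \<Rightarrow> 'a \<Rightarrow> nat \<Rightarrow> nat" where
  "Ztil0 n1 m1 m2 \<nu> y Zf Kp \<omega> = Zf (sel_index n1 m1 m2 \<nu> y Zf Kp \<omega>) \<omega>"

definition Kfull :: "nat \<Rightarrow> nat \<Rightarrow> nat \<Rightarrow> (nat \<Rightarrow> nat \<Rightarrow> int) \<Rightarrow> (nat \<Rightarrow> nat)
    \<Rightarrow> (nat \<Rightarrow> 'a \<Rightarrow> nat \<Rightarrow> nat) \<Rightarrow> (nat \<Rightarrow> 'a \<Rightarrow> nat \<Rightarrow> nat) \<Rightarrow> 'a \<Rightarrow> nat \<Rightarrow> nat" where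
  "Kfull n1 m1 m2 \<nu> y Zf Kp \<omega> j =
     (let N = sel_index n1 m1 m2 \<nu> y Zf Kp \<omega>; K' = Kp N \<omega>; V = Zf N \<omega> in
      if j < m1 then K' j
      else if j < m1 + m2 then nat \<lfloor>Gvec n1 m1 m2 \<nu> (obs_gap n1 y V) K' (j - m1)\<rfloor>
      else 0)"

definition eta :: "(real \<Rightarrow> (nat \<Rightarrow> nat) \<Rightarrow> (nat \<Rightarrow> nat) \<Rightarrow> nat \<Rightarrow> real) \<Rightarrow> (nat \<Rightarrow> nat)
    \<Rightarrow> nat \<Rightarrow> (nat \<Rightarrow> nat) \<Rightarrow> real \<Rightarrow> real" where
  "eta lam y i z t = (LINT s:{0..t}|lborel. lam s z y i)"

definition eta_inv :: "(real \<Rightarrow> (nat \<Rightarrow> nat) \<Rightarrow> (nat \<Rightarrow> nat) \<Rightarrow> nat \<Rightarrow> real) \<Rightarrow> (nat \<Rightarrow> nat)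
    \<Rightarrow> real \<Rightarrow> nat \<Rightarrow> (nat \<Rightarrow> nat) \<Rightarrow> real \<Rightarrow> real" where
  "eta_inv lam y T i z v = (THE t. t \<in> {0..T} \<and> eta lam y i z t = v)"

definition interp_I :: "nat \<Rightarrow> nat \<Rightarrow> nat \<Rightarrow> (nat \<Rightarrow> nat \<Rightarrow> int) \<Rightarrow> (nat \<Rightarrow> nat) \<Rightarrow> real
    \<Rightarrow> (real \<Rightarrow> (nat \<Rightarrow> nat) \<Rightarrow> (nat \<Rightarrow> nat) \<Rightarrow> nat \<Rightarrow> real)
    \<Rightarrow> (nat \<Rightarrow> 'a \<Rightarrow> nat \<Rightarrow> nat) \<Rightarrow> (nat \<Rightarrow> 'a \<Rightarrow> nat \<Rightarrow> nat) \<Rightarrow> (nat \<Rightarrow> nat \<Rightarrow> 'a \<Rightarrow> real)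
    \<Rightarrow> 'a \<Rightarrow> real \<Rightarrow> nat \<Rightarrow> nat" where
  "interp_I n1 m1 m2 \<nu> y T lam Zf Kp \<zeta> \<omega> t i =
     (let z = Ztil0 n1 m1 m2 \<nu> y Zf Kp \<omega> in
      if i < m1 + m2 then
        card {l. l < Kfull n1 m1 m2 \<nu> y Zf Kp \<omega> i \<and>
                 eta_inv lam y T i z (\<zeta> i l \<omega> * eta lam y i z T) \<le> t}
      else 0)"

(* index set for the independence structure under P_0( . | O_p) *)
datatype src = Lab | Filt nat | Unif nat nat

definition src_sigma :: "'a measure \<Rightarrow> ('a \<Rightarrow> nat \<Rightarrow> nat) \<Rightarrow> ('a \<Rightarrow> real \<Rightarrow> nat \<Rightarrow> nat) \<Rightarrow> real
    \<Rightarrow> (nat \<Rightarrow> 'a \<Rightarrow> nat \<Rightarrow> nat) \<Rightarrow> (nat \<Rightarrow> 'a \<Rightarrow> nat \<Rightarrow> nat) \<Rightarrow> (nat \<Rightarrow> nat \<Rightarrow> 'a \<Rightarrow> real)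
    \<Rightarrow> src \<Rightarrow> 'a set set" where
  "src_sigma P Z0 R T Zf Kp \<zeta> s = (case s of
      Lab \<Rightarrow> sigma_sets (space P)
               ({{\<omega>\<in>space P. Z0 \<omega> = z} | z. True} \<union>
                {{\<omega>\<in>space P. R \<omega> t i = c} | t i c. t \<in> {0..T}})
    | Filt j \<Rightarrow> sigma_sets (space P) {{\<omega>\<in>space P. Zf j \<omega> = z \<and> Kp j \<omega> = kk} | z kk. True}
    | Unif i l \<Rightarrow> sigma_sets (space P) {{\<omega>\<in>space P. \<zeta> i l \<omega> \<le> c} | c. True})"

end

theory Submission
  imports Defs "HOL-Combinatorics.Multiset_Permutations"
begin

(* Fix a grid 0 = t_0 < ... < t_r = T. Conditioned on R(T) = k and Z_0 = z0, the grid increments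
   of the Poisson process R are multinomial: each of the k_i jumps of component i falls
   independently into [t_j, t_(j+1)] with probability (eta_i(t_(j+1)) - eta_i(t_j)) / eta_i(T).
   On the filter side, up to a null set, {I(T) = k, Z~_0 = z0} is the event that the selected
   triple is (z0, k'), k' the first m1 components of k, and the relevant uniforms lie in (0,1];
   there the l-th jump of component i
   lies in the grid cell that contains zeta^i_l * eta_i(T). The uniforms are independent of the
   lab variables and of the selection, so the grid increments of I have the same multinomial law.
   Equal finite-dimensional distributions give equal laws on path space, hence equal conditional
   expectations. *)

section \<open>Indefinite integrals of positive functions\<close>

context
  fixes f :: "real \<Rightarrow> real" and T :: real
  assumes pos: "\<And>t. t \<in> {0..T} \<Longrightarrow> 0 < f t"
    and integrable: "set_integrable lborel {0..T} f"
begin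

private lemma set_integral_eq_integral:
  "0 \<le> a \<Longrightarrow> b \<le> T \<Longrightarrow> (LINT s:{a..b}|lborel. f s) = integral {a..b} f"
  by (intro set_borel_integral_eq_integral(2) set_integrable_subset[OF integrable]) auto

lemma indefinite_set_integral_split:
  assumes "0 \<le> a" "a \<le> b" "b \<le> T"
  shows "(LINT s:{0..b}|lborel. f s) = (LINT s:{0..a}|lborel. f s) + (LINT s:{a..b}|lborel. f s)"
proof -
  have "f integrable_on {0..b}"
    by (rule integrable_on_subinterval[OF set_borel_integral_eq_integral(1)[OF integrable]])
       (use assms in auto)
  then have "integral {0..a} f + integral {a..b} f = integral {0..b} f"
    using assms by (intro Henstock_Kurzweil_Integration.integral_combine) auto
  then show ?thesis
    using assms by (simp add: set_integral_eq_integral)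
qed

lemma set_integral_interval_pos:
  assumes ab: "0 \<le> a" "a < b" "b \<le> T"
  shows "0 < (LINT s:{a..b}|lborel. f s)"
proof -
  let ?g = "\<lambda>x. indicator {a..b} x *\<^sub>R f x"
  have ig: "integrable lborel ?g"
    using set_integrable_subset[OF integrable, of "{a..b}"] ab unfolding set_integrable_def by simp
  have nn: "AE x in lborel. 0 \<le> ?g x"
    using pos ab by (auto simp: indicator_def intro!: less_imp_le)
  have "(LINT s:{a..b}|lborel. f s) \<noteq> 0"
  proof
    assume "(LINT s:{a..b}|lborel. f s) = 0"
    then have "AE x in lborel. ?g x = 0"
      using integral_nonneg_eq_0_iff_AE[OF ig nn] unfolding set_lebesgue_integral_def by simp
    then have "AE x in lborel. x \<notin> {a..b}"
    proof eventually_elim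
      case (elim x)
      show ?case
      proof
        assume x: "x \<in> {a..b}"
        then have "0 < f x" using pos ab by auto
        with elim x show False by simp
      qed
    qed
    then have "emeasure lborel {a..b} = 0"
      by (subst (asm) AE_iff_measurable[OF _ refl])
         (auto simp: atLeastAtMost_def atLeast_def atMost_def Collect_conj_eq)
    with ab show False by simp
  qed
  moreover have "0 \<le> (LINT s:{a..b}|lborel. f s)"
    unfolding set_lebesgue_integral_def by (rule integral_nonneg_AE[OF nn])
  ultimately show ?thesis by simp
qed

lemma strict_mono_on_indefinite_set_integral:
  "strict_mono_on {0..T} (\<lambda>t. LINT s:{0..t}|lborel. f s)"
proof (rule strict_mono_onI)
  fix a b assume "a \<in> {0..T}" "b \<in> {0..T}" "a < b"
  then show "(LINT s:{0..a}|lborel. f s) < (LINT s:{0..b}|lborel. f s)"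
    using indefinite_set_integral_split[of a b] set_integral_interval_pos[of a b] by simp
qed

lemma continuous_on_indefinite_set_integral:
  "continuous_on {0..T} (\<lambda>t. LINT s:{0..t}|lborel. f s)"
proof -
  have "continuous_on {0..T} (\<lambda>t. integral {0..t} f)"
    using set_borel_integral_eq_integral(1)[OF integrable] by (rule indefinite_integral_continuous_1)
  then show ?thesis
    by (rule continuous_on_cong[THEN iffD1, rotated 2]) (auto simp: set_integral_eq_integral)
qed

end

lemma set_integral_point: "(LINT s:{a..a}|lborel. (f :: real \<Rightarrow> real) s) = 0"
proof -
  have "AE x in lborel. indicator {a..a} x *\<^sub>R f x = 0"
    using AE_lborel_singleton[of a] by eventually_elim auto
  then show ?thesis unfolding set_lebesgue_integral_def by (rule integral_eq_zero_AE)
qed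

lemma strict_mono_on_inverse_le_iff:
  fixes F :: "real \<Rightarrow> real"
  assumes mono: "strict_mono_on {0..T} F" and cont: "continuous_on {0..T} F"
    and v: "F 0 \<le> v" "v \<le> F T" and t: "t \<in> {0..T}"
  shows "(THE s. s \<in> {0..T} \<and> F s = v) \<le> t \<longleftrightarrow> v \<le> F t"
proof -
  have "0 \<le> T" using t by simp
  then obtain s where s: "s \<in> {0..T}" "F s = v"
    using IVT'[OF v _ cont] by auto
  have "x = s" if "x \<in> {0..T}" "F x = v" for x
    using strict_mono_on_eqD[OF mono, of s x] that s by simp
  then have "(THE s. s \<in> {0..T} \<and> F s = v) = s"
    using s by blast
  then show ?thesis
    using s strict_mono_on_less_eq[OF mono s(1) t] by simp
qed

section \<open>Multinomial counting\<close>

definition mset_of_counts :: "nat \<Rightarrow> (nat \<Rightarrow> nat) \<Rightarrow> nat multiset" where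
  "mset_of_counts r f = (\<Sum>j<r. replicate_mset (f j) j)"

lemma count_mset_of_counts: "count (mset_of_counts r f) x = (if x < r then f x else 0)"
  unfolding mset_of_counts_def by (induction r) (auto simp: count_sum)

lemma set_mset_of_counts: "set_mset (mset_of_counts r f) \<subseteq> {..<r}"
  by (auto simp: count_mset_of_counts simp flip: count_greater_zero_iff split: if_splits)

lemma size_mset_of_counts: "size (mset_of_counts r f) = (\<Sum>j<r. f j)"
  unfolding mset_of_counts_def by (induction r) auto

lemma prod_nth_eq_prod_power_count:
  fixes w :: "nat \<Rightarrow> 'a :: comm_monoid_mult"
  assumes "set xs \<subseteq> {..<r}"
  shows "(\<Prod>l<length xs. w (xs ! l)) = (\<Prod>j<r. w j ^ count (mset xs) j)"
  using assms
proof (induction xs)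
  case Nil
  then show ?case by simp
next
  case (Cons x xs)
  have "(\<Prod>l<length (x # xs). w ((x # xs) ! l)) = w x * (\<Prod>l<length xs. w (xs ! l))"
    by (simp only: length_Cons prod.lessThan_Suc_shift) simp
  also have "\<dots> = (\<Prod>j<r. (if j = x then w j else 1)) * (\<Prod>j<r. w j ^ count (mset xs) j)"
    using Cons by (simp add: prod.delta)
  also have "\<dots> = (\<Prod>j<r. (if j = x then w j else 1) * w j ^ count (mset xs) j)"
    by (simp add: prod.distrib)
  also have "\<dots> = (\<Prod>j<r. w j ^ count (mset (x # xs)) j)"
    by (intro prod.cong) auto
  finally show ?case .
qed

lemma real_card_permutations_of_multiset:
  fixes A :: "nat multiset"
  assumes "set_mset A \<subseteq> {..<r}"
  shows "real (card (permutations_of_multiset A)) = fact (size A) / (\<Prod>j<r. fact (count A j))"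
proof -
  have "(\<Prod>j<r. fact (count A j) :: nat) = (\<Prod>x\<in>set_mset A. fact (count A x))"
    using assms by (intro prod.mono_neutral_right) (auto simp: not_in_iff)
  then have "card (permutations_of_multiset A) * (\<Prod>j<r. fact (count A j) :: nat) = fact (size A)"
    using card_permutations_of_multiset_aux[of A] by simp
  then have "real (card (permutations_of_multiset A)) * (\<Prod>j<r. fact (count A j)) = fact (size A)"
    by (metis (mono_tags, lifting) of_nat_fact of_nat_mult of_nat_prod prod.cong)
  then show ?thesis by (simp add: field_simps)
qed

lemma sum_permutations_of_multiset_prod_nth:
  fixes w :: "nat \<Rightarrow> real" and A :: "nat multiset"
  assumes "set_mset A \<subseteq> {..<r}"
  shows "(\<Sum>xs\<in>permutations_of_multiset A. \<Prod>l<length xs. w (xs ! l))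
         = real (card (permutations_of_multiset A)) * (\<Prod>j<r. w j ^ count A j)"
proof -
  have "(\<Prod>l<length xs. w (xs ! l)) = (\<Prod>j<r. w j ^ count A j)"
    if "xs \<in> permutations_of_multiset A" for xs
    using prod_nth_eq_prod_power_count[of xs r w] permutations_of_multisetD[OF that] assms by auto
  then show ?thesis by simp
qed

lemma count_mset_map_upt: "count (mset (map f [0..<n])) j = card {l. l < n \<and> f l = j}"
proof (induction n)
  case 0
  then show ?case by simp
next
  case (Suc n)
  have "{l. l < Suc n \<and> f l = j} = {l. l < n \<and> f l = j} \<union> (if f n = j then {n} else {})"
    by (auto simp: less_Suc_eq)
  then have "card {l. l < Suc n \<and> f l = j} = card {l. l < n \<and> f l = j} + (if f n = j then 1 else 0)"
    by (auto simp: card_Un_disjoint)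
  then show ?case using Suc by simp
qed

text \<open>Given the total, independent Poisson counts are multinomially distributed.\<close>
lemma poisson_prob_prod_div_sum:
  fixes L :: "nat \<Rightarrow> real" and a :: "nat \<Rightarrow> nat"
  assumes pos: "0 < (\<Sum>j<r. L j)"
  shows "(\<Prod>j<r. poisson_prob (L j) (a j)) / poisson_prob (\<Sum>j<r. L j) (\<Sum>j<r. a j)
         = fact (\<Sum>j<r. a j) / (\<Prod>j<r. fact (a j)) * (\<Prod>j<r. (L j / (\<Sum>j<r. L j)) ^ a j)"
proof -
  define S where "S = (\<Sum>j<r. L j)"
  have "(\<Prod>j<r. exp (- L j)) = exp (- S)"
    unfolding S_def by (simp add: exp_sum[symmetric] sum_negf)
  then have prod: "(\<Prod>j<r. poisson_prob (L j) (a j)) = exp (- S) * (\<Prod>j<r. L j ^ a j) / (\<Prod>j<r. fact (a j))"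
    unfolding poisson_prob_def by (simp add: prod.distrib prod_dividef)
  have "(\<Prod>j<r. (L j / S) ^ a j) = (\<Prod>j<r. L j ^ a j) / S ^ (\<Sum>j<r. a j)"
    by (simp add: power_divide prod_dividef power_sum)
  moreover have "S > 0" using pos S_def by simp
  ultimately show ?thesis
    unfolding S_def[symmetric] prod by (simp add: field_simps poisson_prob_def)
qed

lemma real_card_lessThan_filter: "real (card {l. l < (K::nat) \<and> P l}) = (\<Sum>l<K. if P l then 1 else 0)"
proof -
  have "{l. l < K \<and> P l} = {l\<in>{..<K}. P l}" by auto
  then have "real (card {l. l < K \<and> P l}) = (\<Sum>l\<in>{l\<in>{..<K}. P l}. 1)" by simp
  also have "\<dots> = (\<Sum>l<K. if P l then 1 else 0)" by (rule sum.inter_filter) simp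
  finally show ?thesis .
qed

lemma sum_lessThan_add_eq: "(\<Sum>j<a + b. f j) = (\<Sum>j<a. f j) + (\<Sum>j<b. f (a + j :: nat))"
  by (induction b) (auto simp: add.assoc)

section \<open>Integer paths on a grid\<close>

lemma grid_through_finite_set:
  fixes T :: real and J :: "real set"
  assumes T: "0 < T" and J: "finite J" "J \<subseteq> {0..T}"
  obtains r ts where "ts 0 = 0" "ts r = T" "\<And>j. j < r \<Longrightarrow> ts j < ts (Suc j)" "J \<subseteq> ts ` {..r}"
proof -
  obtain xs :: "real list" where xs: "sorted_wrt (<) xs" "set xs = J \<union> {0, T}"
    using ex1_sorted_list_for_set_if_finite[of "J \<union> {0, T}"] J by auto
  define r where "r = length xs - 1"
  define ts where "ts = (\<lambda>j. xs ! j)"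
  have len: "length xs = Suc r"
    using xs(2) unfolding r_def by (cases xs) auto
  have range: "ts j \<in> {0..T}" if "j \<le> r" for j
  proof -
    have "ts j \<in> set xs" using len that unfolding ts_def by simp
    then show ?thesis using xs(2) J T by auto
  qed
  have less: "ts j < ts j'" if "j < j'" "j' \<le> r" for j j'
    unfolding ts_def using sorted_wrt_nth_less[OF xs(1)] len that by simp
  have member: "t \<in> ts ` {..r}" if "t \<in> set xs" for t
    using that len by (auto simp: in_set_conv_nth ts_def less_Suc_eq_le)
  have "ts 0 = 0"
  proof -
    obtain i where "i \<le> r" "ts i = 0" using member[of 0] xs(2) by auto
    then have "ts 0 \<le> 0" using less[of 0 i] by (cases "i = 0") auto
    then show ?thesis using range[of 0] by simp
  qed
  moreover have "ts r = T"
  proof -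
    obtain j where "j \<le> r" "ts j = T" using member[of T] xs(2) by auto
    then have "T \<le> ts r" using less[of j r] by (cases "j = r") auto
    then show ?thesis using range[of r] by simp
  qed
  moreover have "J \<subseteq> ts ` {..r}"
    using member xs(2) by auto
  ultimately show ?thesis
    using less by (intro that) auto
qed

lemma monotone_grid_le:
  fixes ts :: "nat \<Rightarrow> real"
  assumes "\<And>j. j < r \<Longrightarrow> ts j \<le> ts (Suc j)" "i \<le> j" "j \<le> r"
  shows "ts i \<le> ts j"
  using assms(2,3)
proof (induction j rule: dec_induct)
  case (step j)
  then show ?case using assms(1)[of j] by simp
qed simp

lemma grid_point_in_interval:
  fixes ts :: "nat \<Rightarrow> real"
  assumes "ts 0 = 0" "ts r = T" "\<And>j. j < r \<Longrightarrow> ts j \<le> ts (Suc j)" "j \<le> r"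
  shows "ts j \<in> {0..T}"
  using monotone_grid_le[where r=r and ts=ts, OF assms(3), of 0 j]
    monotone_grid_le[where r=r and ts=ts, OF assms(3), of j r] assms(1,2,4)
  by auto

definition real_vec :: "nat \<Rightarrow> (nat \<Rightarrow> nat) \<Rightarrow> nat \<Rightarrow> real" where
  "real_vec m c = (\<lambda>i\<in>{..<m}. real (c i))"

definition has_grid_increments ::
  "nat \<Rightarrow> nat \<Rightarrow> (nat \<Rightarrow> real) \<Rightarrow> (real \<Rightarrow> nat \<Rightarrow> nat) \<Rightarrow> (nat \<Rightarrow> nat \<Rightarrow> nat) \<Rightarrow> bool"
where
  "has_grid_increments m r ts x a \<longleftrightarrow> (\<forall>i<m. \<forall>j<r. x (ts (Suc j)) i = x (ts j) i + a i j)"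

definition monotone_grid_path ::
  "nat \<Rightarrow> nat \<Rightarrow> (nat \<Rightarrow> real) \<Rightarrow> (nat \<Rightarrow> nat) \<Rightarrow> (real \<Rightarrow> nat \<Rightarrow> nat) \<Rightarrow> bool"
where
  "monotone_grid_path m r ts k x \<longleftrightarrow> x (ts 0) = (\<lambda>_. 0) \<and> x (ts r) = k \<and> (\<forall>j\<le>r. x (ts j) \<in> vecs m) \<and>
     (\<forall>j<r. \<forall>i<m. x (ts j) i \<le> x (ts (Suc j)) i)"

definition increment_partial_sum :: "nat \<Rightarrow> (nat \<Rightarrow> nat \<Rightarrow> nat) \<Rightarrow> nat \<Rightarrow> nat \<Rightarrow> nat" where
  "increment_partial_sum m a j = (\<lambda>i. if i < m then (\<Sum>j'<j. a i j') else 0)"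

definition increment_arrays :: "nat \<Rightarrow> nat \<Rightarrow> (nat \<Rightarrow> nat) \<Rightarrow> (nat \<Rightarrow> nat \<Rightarrow> nat) set" where
  "increment_arrays m r k = {a. (\<forall>i j. m \<le> i \<or> r \<le> j \<longrightarrow> a i j = 0) \<and> (\<forall>i<m. (\<Sum>j<r. a i j) = k i)}"

definition admissible_increments :: "nat \<Rightarrow> nat \<Rightarrow> (nat \<Rightarrow> nat) \<Rightarrow> (nat \<Rightarrow> real) \<Rightarrow> real set
    \<Rightarrow> (real \<Rightarrow> (nat \<Rightarrow> real) set) \<Rightarrow> (nat \<Rightarrow> nat \<Rightarrow> nat) set" where
  "admissible_increments m r k ts J A = {a \<in> increment_arrays m r k.
      \<forall>j\<le>r. ts j \<in> J \<longrightarrow> real_vec m (increment_partial_sum m a j) \<in> A (ts j)}"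

lemma grid_path_eq_increment_partial_sum:
  assumes x0: "x (ts 0) = (\<lambda>_. 0)" and x: "\<forall>j\<le>r. x (ts j) \<in> vecs m"
    and inc: "has_grid_increments m r ts x a" and j: "j \<le> r"
  shows "x (ts j) = increment_partial_sum m a j"
  using j
proof (induction j)
  case 0
  then show ?case using x0 by (auto simp: increment_partial_sum_def)
next
  case (Suc j)
  show ?case
  proof
    fix i
    show "x (ts (Suc j)) i = increment_partial_sum m a (Suc j) i"
    proof (cases "i < m")
      case True
      then show ?thesis
        using inc Suc unfolding has_grid_increments_def increment_partial_sum_def by auto
    next
      case False
      then show ?thesis
        using x Suc.prems unfolding vecs_def increment_partial_sum_def by auto
    qed
  qed
qed

lemma increment_arrays_le:
  assumes a: "a \<in> increment_arrays m r k"
  shows "a i j \<le> k i"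
proof (cases "i < m \<and> j < r")
  case True
  then have "a i j \<le> (\<Sum>j<r. a i j)" by (intro member_le_sum) auto
  then show ?thesis using a True unfolding increment_arrays_def by auto
next
  case False
  then show ?thesis using a unfolding increment_arrays_def by auto
qed

lemma finite_increment_arrays: "finite (increment_arrays m r k)"
proof -
  define K where "K = (\<Sum>i<m. k i)"
  define B where "B = {f :: nat \<Rightarrow> nat. \<forall>j. (j \<in> {..<r} \<longrightarrow> f j \<in> {..K}) \<and> (j \<notin> {..<r} \<longrightarrow> f j = 0)}"
  have "finite B" unfolding B_def by (intro finite_set_of_finite_funs) auto
  then have "finite {a. \<forall>i. (i \<in> {..<m} \<longrightarrow> a i \<in> B) \<and> (i \<notin> {..<m} \<longrightarrow> a i = (\<lambda>_. 0))}"
    by (intro finite_set_of_finite_funs) auto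
  moreover have "a i j \<le> K" if "a \<in> increment_arrays m r k" "i < m" for a i j
  proof -
    have "k i \<le> K" unfolding K_def using that(2) by (intro member_le_sum) auto
    then show ?thesis using increment_arrays_le[OF that(1), of i j] by simp
  qed
  then have "increment_arrays m r k
      \<subseteq> {a. \<forall>i. (i \<in> {..<m} \<longrightarrow> a i \<in> B) \<and> (i \<notin> {..<m} \<longrightarrow> a i = (\<lambda>_. 0))}"
    unfolding B_def by (auto simp: increment_arrays_def fun_eq_iff)
  ultimately show ?thesis by (rule finite_subset[rotated])
qed

lemma finite_admissible_increments: "finite (admissible_increments m r k ts J A)"
  unfolding admissible_increments_def
  by (rule finite_subset[OF _ finite_increment_arrays[of m r k]]) auto

lemma grid_increments_unique:
  assumes "a \<in> increment_arrays m r k" "a' \<in> increment_arrays m r k"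
    and "has_grid_increments m r ts x a" "has_grid_increments m r ts x a'"
  shows "a = a'"
proof (intro ext)
  fix i j
  show "a i j = a' i j"
    using assms unfolding increment_arrays_def has_grid_increments_def
    by (cases "i < m \<and> j < r") force+
qed

lemma cylinder_iff_admissible_increments:
  assumes x: "monotone_grid_path m r ts k x" and J: "J \<subseteq> ts ` {..r}"
  shows "(\<forall>t\<in>J. real_vec m (x t) \<in> A t)
     \<longleftrightarrow> (\<exists>a\<in>admissible_increments m r k ts J A. has_grid_increments m r ts x a)"
proof -
  have x0: "x (ts 0) = (\<lambda>_. 0)" and xvec: "\<forall>j\<le>r. x (ts j) \<in> vecs m"
    using x unfolding monotone_grid_path_def by auto
  show ?thesis
  proof
    assume cyl: "\<forall>t\<in>J. real_vec m (x t) \<in> A t"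
    define a where "a i j = (if i < m \<and> j < r then x (ts (Suc j)) i - x (ts j) i else 0)" for i j
    have inc: "has_grid_increments m r ts x a"
      using x unfolding has_grid_increments_def monotone_grid_path_def a_def by auto
    note partial = grid_path_eq_increment_partial_sum[OF x0 xvec inc]
    have "(\<Sum>j<r. a i j) = k i" if "i < m" for i
      using partial[of r] x that unfolding monotone_grid_path_def increment_partial_sum_def
      by (auto simp: fun_eq_iff)
    then have "a \<in> admissible_increments m r k ts J A"
      using cyl partial unfolding admissible_increments_def increment_arrays_def a_def by auto
    with inc show "\<exists>a\<in>admissible_increments m r k ts J A. has_grid_increments m r ts x a" by blast
  next
    assume "\<exists>a\<in>admissible_increments m r k ts J A. has_grid_increments m r ts x a"
    then obtain a where a: "a \<in> admissible_increments m r k ts J A" and inc: "has_grid_increments m r ts x a"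
      by blast
    show "\<forall>t\<in>J. real_vec m (x t) \<in> A t"
      using a J grid_path_eq_increment_partial_sum[OF x0 xvec inc]
      unfolding admissible_increments_def by auto
  qed
qed

lemma (in finite_measure) measure_cylinder_eq_sum_grid_increments:
  assumes E: "E \<in> sets M"
    and inc: "\<And>a. {\<omega>\<in>space M. has_grid_increments m r ts (X \<omega>) a} \<in> sets M"
    and path: "\<And>\<omega>. \<omega> \<in> E \<Longrightarrow> monotone_grid_path m r ts k (X \<omega>)" and J: "J \<subseteq> ts ` {..r}"
  shows "measure M (E \<inter> {\<omega>\<in>space M. \<forall>t\<in>J. real_vec m (X \<omega> t) \<in> A t})
       = (\<Sum>a\<in>admissible_increments m r k ts J A.
            measure M (E \<inter> {\<omega>\<in>space M. has_grid_increments m r ts (X \<omega>) a}))"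
proof -
  let ?Inc = "\<lambda>a. E \<inter> {\<omega>\<in>space M. has_grid_increments m r ts (X \<omega>) a}"
  have "\<omega> \<in> E \<inter> {\<omega>\<in>space M. \<forall>t\<in>J. real_vec m (X \<omega> t) \<in> A t}
     \<longleftrightarrow> \<omega> \<in> (\<Union>a\<in>admissible_increments m r k ts J A. ?Inc a)" for \<omega>
  proof (cases "\<omega> \<in> E")
    case True
    then show ?thesis
      using cylinder_iff_admissible_increments[OF path[OF True] J, of A] sets.sets_into_space[OF E]
      by auto
  qed simp
  then have eq: "E \<inter> {\<omega>\<in>space M. \<forall>t\<in>J. real_vec m (X \<omega> t) \<in> A t}
      = (\<Union>a\<in>admissible_increments m r k ts J A. ?Inc a)"
    by blast
  have "disjoint_family_on ?Inc (admissible_increments m r k ts J A)"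
    unfolding disjoint_family_on_def admissible_increments_def
    using grid_increments_unique by blast
  then show ?thesis
    unfolding eq using E inc
    by (intro finite_measure_finite_Union finite_admissible_increments) auto
qed

lemma sets_has_grid_increments:
  assumes meas: "\<And>j i. j \<le> r \<Longrightarrow> (\<lambda>\<omega>. X \<omega> (ts j) i) \<in> measurable M (count_space UNIV)"
  shows "{\<omega>\<in>space M. has_grid_increments m r ts (X \<omega>) a} \<in> sets M"
proof -
  have step: "{\<omega>\<in>space M. j < r \<longrightarrow> X \<omega> (ts (Suc j)) i = X \<omega> (ts j) i + a i j} \<in> sets M" for i j
  proof (cases "j < r")
    case True
    have [measurable]: "(\<lambda>\<omega>. X \<omega> (ts j) i) \<in> measurable M (count_space UNIV)"
      "(\<lambda>\<omega>. X \<omega> (ts (Suc j)) i) \<in> measurable M (count_space UNIV)"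
      using True by (auto intro: meas)
    have "{\<omega>\<in>space M. X \<omega> (ts (Suc j)) i = X \<omega> (ts j) i + a i j}
        = {\<omega>\<in>space M. \<exists>n. X \<omega> (ts j) i = n \<and> X \<omega> (ts (Suc j)) i = n + a i j}"
      by auto
    also have "\<dots> \<in> sets M" by measurable
    finally show ?thesis using True by simp
  qed simp
  have "{\<omega>\<in>space M. \<forall>j. j < r \<longrightarrow> X \<omega> (ts (Suc j)) i = X \<omega> (ts j) i + a i j} \<in> sets M" for i
    by (rule sets.sets_Collect_countable_All[OF step])
  then have "{\<omega>\<in>space M. i < m \<longrightarrow> (\<forall>j. j < r \<longrightarrow> X \<omega> (ts (Suc j)) i = X \<omega> (ts j) i + a i j)} \<in> sets M"
    for i by (rule sets.sets_Collect_imp[OF _ sets.sets_Collect_const])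
  then show ?thesis
    unfolding has_grid_increments_def by (rule sets.sets_Collect_countable_All)
qed

definition partition_cell :: "(nat \<Rightarrow> real) \<Rightarrow> real \<Rightarrow> nat" where
  "partition_cell p x = (LEAST j. x \<le> p (Suc j))"

context
  fixes p :: "nat \<Rightarrow> real" and r :: nat
  assumes mono: "\<And>j j'. j \<le> j' \<Longrightarrow> j' \<le> r \<Longrightarrow> p j \<le> p j'"
    and start: "p 0 = 0" and finish: "p r = 1"
begin

lemma partition_cell_bounds:
  assumes x: "0 < x" "x \<le> 1"
  shows "partition_cell p x < r" "p (partition_cell p x) < x" "x \<le> p (Suc (partition_cell p x))"
proof -
  have r: "0 < r" using start finish by (cases r) auto
  then have ex: "x \<le> p (Suc (r - 1))" using finish x by simp
  show "x \<le> p (Suc (partition_cell p x))"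
    unfolding partition_cell_def by (rule LeastI[of "\<lambda>j. x \<le> p (Suc j)", OF ex])
  have "partition_cell p x \<le> r - 1"
    unfolding partition_cell_def by (rule Least_le[of "\<lambda>j. x \<le> p (Suc j)", OF ex])
  then show "partition_cell p x < r" using r by simp
  show "p (partition_cell p x) < x"
  proof (cases "partition_cell p x")
    case 0
    then show ?thesis using start x by simp
  next
    case (Suc j)
    then have "\<not> x \<le> p (Suc j)"
      unfolding partition_cell_def by (metis lessI not_less_Least)
    then show ?thesis using Suc by simp
  qed
qed

lemma le_partition_point_iff:
  assumes x: "0 < x" "x \<le> 1" and j: "j \<le> r"
  shows "x \<le> p j \<longleftrightarrow> partition_cell p x < j"
  using partition_cell_bounds[OF x] mono[of j "partition_cell p x"] mono[of "Suc (partition_cell p x)" j] j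
  by (meson Suc_leI less_le_trans not_le order.strict_trans2 order_less_imp_le)

lemma partition_cell_eqI:
  assumes j: "j < r" and x: "p j < x" "x \<le> p (Suc j)"
  shows "partition_cell p x = j"
proof -
  have x01: "0 < x" "x \<le> 1"
    using x mono[of 0 j] mono[of "Suc j" r] j start finish by auto
  show ?thesis
    using le_partition_point_iff[OF x01, of j] le_partition_point_iff[OF x01, of "Suc j"] x j by auto
qed

end

section \<open>Laws on path space\<close>

lemma uniform_measure_cong_AE:
  assumes A: "A \<in> sets M" and B: "B \<in> sets M" and AB: "AE x in M. x \<in> A \<longleftrightarrow> x \<in> B"
  shows "uniform_measure M A = uniform_measure M B"
proof -
  note [measurable] = A B
  have eq: "emeasure M A = emeasure M B" by (rule emeasure_eq_AE[OF AB A B])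
  have ae: "AE x in M. indicator A x / emeasure M A = indicator B x / emeasure M B"
    using AB by eventually_elim (simp add: eq indicator_def)
  show ?thesis
    unfolding uniform_measure_def by (rule density_cong[OF _ _ ae]; measurable)
qed

lemma as_path_in_prod_emb_iff:
  assumes "J \<subseteq> {0..T}"
  shows "as_path m T x \<in> prod_emb {0..T} (\<lambda>_. PiM {..<m} (\<lambda>_. borel)) J (PiE J A)
     \<longleftrightarrow> (\<forall>t\<in>J. real_vec m (x t) \<in> A t)"
proof -
  have "as_path m T x \<in> extensional {0..T}"
    "\<forall>t\<in>{0..T}. as_path m T x t \<in> space (PiM {..<m} (\<lambda>_. borel :: real measure))"
    unfolding as_path_def space_PiM by auto
  moreover have "restrict (as_path m T x) J \<in> PiE J A \<longleftrightarrow> (\<forall>t\<in>J. real_vec m (x t) \<in> A t)"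
    using assms unfolding as_path_def real_vec_def by (auto simp: PiE_iff)
  ultimately show ?thesis unfolding prod_emb_iff by simp
qed

lemma measurable_as_path:
  assumes "\<And>t i. t \<in> {0..T} \<Longrightarrow> (\<lambda>\<omega>. X \<omega> t i) \<in> measurable M (count_space UNIV)"
  shows "(\<lambda>\<omega>. as_path m T (X \<omega>)) \<in> measurable M (path_space m T)"
  unfolding path_space_def as_path_def
proof (intro measurable_restrict)
  fix t i assume "t \<in> {0..T}" "i \<in> {..<m}"
  then show "(\<lambda>\<omega>. real (X \<omega> t i)) \<in> borel_measurable M"
    by (intro measurable_compose[OF assms]) auto
qed

lemma distr_as_path_uniform_measure_eqI:
  assumes P: "prob_space P"
    and E: "E \<in> sets P" "0 < measure P E" and E': "E' \<in> sets P" "0 < measure P E'"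
    and X: "\<And>t i. t \<in> {0..T} \<Longrightarrow> (\<lambda>\<omega>. X \<omega> t i) \<in> measurable P (count_space UNIV)"
    and Y: "\<And>t i. t \<in> {0..T} \<Longrightarrow> (\<lambda>\<omega>. Y \<omega> t i) \<in> measurable P (count_space UNIV)"
    and cylinders: "\<And>J A. finite J \<Longrightarrow> J \<subseteq> {0..T} \<Longrightarrow>
        (\<And>t. t \<in> J \<Longrightarrow> A t \<in> sets (PiM {..<m} (\<lambda>_. borel))) \<Longrightarrow>
        measure P (E \<inter> {\<omega>\<in>space P. \<forall>t\<in>J. real_vec m (X \<omega> t) \<in> A t}) / measure P E
      = measure P (E' \<inter> {\<omega>\<in>space P. \<forall>t\<in>J. real_vec m (Y \<omega> t) \<in> A t}) / measure P E'"
  shows "distr (uniform_measure P E) (path_space m T) (\<lambda>\<omega>. as_path m T (X \<omega>))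
       = distr (uniform_measure P E') (path_space m T) (\<lambda>\<omega>. as_path m T (Y \<omega>))"
proof -
  interpret prob_space P by (rule P)
  have uniform: "prob_space (uniform_measure P F)" if "F \<in> sets P" "0 < measure P F" for F
    using that by (intro prob_space_uniform_measure) (auto simp: emeasure_eq_measure)
  note mX = measurable_as_path[OF X, where m=m] and mY = measurable_as_path[OF Y, where m=m]
  have cylinder_prob: "emeasure (distr (uniform_measure P F) (path_space m T) (\<lambda>\<omega>. as_path m T (Z \<omega>)))
        (prod_emb {0..T} (\<lambda>_. PiM {..<m} (\<lambda>_. borel)) J (PiE J A))
      = ennreal (measure P (F \<inter> {\<omega>\<in>space P. \<forall>t\<in>J. real_vec m (Z \<omega> t) \<in> A t}) / measure P F)"
    if F: "F \<in> sets P" "0 < measure P F"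
      and Z: "(\<lambda>\<omega>. as_path m T (Z \<omega>)) \<in> measurable P (path_space m T)"
      and J: "finite J" "J \<subseteq> {0..T}" "\<And>t. t \<in> J \<Longrightarrow> A t \<in> sets (PiM {..<m} (\<lambda>_. borel))"
    for F Z J A
  proof -
    let ?E = "prod_emb {0..T} (\<lambda>_. PiM {..<m} (\<lambda>_. borel :: real measure)) J (PiE J A)"
    have Es: "?E \<in> sets (path_space m T)"
      unfolding path_space_def using J by (intro sets_PiM_I) auto
    have pre: "(\<lambda>\<omega>. as_path m T (Z \<omega>)) -` ?E \<inter> space P = {\<omega>\<in>space P. \<forall>t\<in>J. real_vec m (Z \<omega> t) \<in> A t}"
      using as_path_in_prod_emb_iff[OF J(2)] by auto
    then have "{\<omega>\<in>space P. \<forall>t\<in>J. real_vec m (Z \<omega> t) \<in> A t} \<in> sets P"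
      using measurable_sets[OF Z Es] by simp
    then show ?thesis
      using Es Z pre F
      by (simp add: emeasure_distr emeasure_eq_measure divide_ennreal measurable_cong_sets[OF sets_uniform_measure refl])
  qed
  show ?thesis
  proof (rule measure_eqI_PiM_infinite[where I="{0..T}" and M="\<lambda>_. PiM {..<m} (\<lambda>_. borel)"])
    show "finite_measure (distr (uniform_measure P E) (path_space m T) (\<lambda>\<omega>. as_path m T (X \<omega>)))"
      using prob_space.prob_space_distr[OF uniform[OF E], of "\<lambda>\<omega>. as_path m T (X \<omega>)" "path_space m T"] mX
      by (simp add: prob_space_def measurable_cong_sets[OF sets_uniform_measure refl])
    fix J and A :: "real \<Rightarrow> (nat \<Rightarrow> real) set"
    assume "finite J" "J \<subseteq> {0..T}" "\<And>t. t \<in> J \<Longrightarrow> A t \<in> sets (PiM {..<m} (\<lambda>_. borel))"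
    then show "emeasure (distr (uniform_measure P E) (path_space m T) (\<lambda>\<omega>. as_path m T (X \<omega>)))
          (prod_emb {0..T} (\<lambda>_. PiM {..<m} (\<lambda>_. borel :: real measure)) J (PiE J A))
        = emeasure (distr (uniform_measure P E') (path_space m T) (\<lambda>\<omega>. as_path m T (Y \<omega>)))
          (prod_emb {0..T} (\<lambda>_. PiM {..<m} (\<lambda>_. borel :: real measure)) J (PiE J A))"
      using cylinder_prob[OF E mX] cylinder_prob[OF E' mY] cylinders by simp
  qed (simp_all add: path_space_def)
qed

section \<open>The lab process and the filter\<close>

lemma countable_vecs: "countable (vecs d :: (nat \<Rightarrow> nat) set)"
proof -
  have "vecs d \<subseteq> (\<lambda>xs i. if i < length xs then xs ! i else (0::nat)) ` UNIV"
  proof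
    fix x :: "nat \<Rightarrow> nat" assume "x \<in> vecs d"
    then have "x = (\<lambda>i. if i < length (map x [0..<d]) then map x [0..<d] ! i else 0)"
      by (auto simp: vecs_def fun_eq_iff)
    then show "x \<in> range (\<lambda>xs i. if i < length xs then xs ! i else (0::nat))" by blast
  qed
  then show ?thesis by (rule countable_subset) simp
qed

locale lab_filter_model = prob_space P0
  for P0 :: "'a measure" +
  fixes n1 n2 m1 m2 :: nat and T :: real and y :: "nat \<Rightarrow> nat"
    and \<nu> :: "nat \<Rightarrow> nat \<Rightarrow> int"
    and lam :: "real \<Rightarrow> (nat \<Rightarrow> nat) \<Rightarrow> (nat \<Rightarrow> nat) \<Rightarrow> nat \<Rightarrow> real"
    and Z0 :: "'a \<Rightarrow> nat \<Rightarrow> nat" and R :: "'a \<Rightarrow> real \<Rightarrow> nat \<Rightarrow> nat" and Op :: "'a set"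
    and Zf :: "nat \<Rightarrow> 'a \<Rightarrow> nat \<Rightarrow> nat" and Kp :: "nat \<Rightarrow> 'a \<Rightarrow> nat \<Rightarrow> nat"
    and \<zeta> :: "nat \<Rightarrow> nat \<Rightarrow> 'a \<Rightarrow> real"
  assumes dims: "n2 = m2"
    and T_pos: "T > 0"
    and y_vec: "y \<in> vecs n2"
    and B_inv: "block_invertible n1 m1 m2 \<nu>"
    and lam_pos: "\<forall>t\<in>{0..T}. \<forall>z\<in>vecs (n1+n2). \<forall>yy\<in>vecs n2. \<forall>i<m1+m2. lam t z yy i > 0"
    and lam_int: "\<forall>z\<in>vecs (n1+n2). \<forall>yy\<in>vecs n2. \<forall>i<m1+m2.
                    set_integrable lborel {0..T} (\<lambda>t. lam t z yy i)"
    and lab_vals: "\<forall>\<omega>\<in>space P0. Z0 \<omega> \<in> vecs (n1+n2) \<and> counting_path (m1+m2) T (R \<omega>)"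
    and Op_ev: "Op \<in> sets P0" and Op_pos: "measure P0 Op > 0"
    and R_law: "\<forall>z\<in>vecs (n1+n2). cond_poisson_process P0 (Op \<inter> {\<omega>\<in>space P0. Z0 \<omega> = z}) R (m1+m2) T
                    (\<lambda>i t. lam t z y i)"
    and filt_vals: "\<forall>\<omega>\<in>space P0. \<forall>i. Zf i \<omega> \<in> vecs (n1+n2) \<and> Kp i \<omega> \<in> vecs m1"
    and zeta_law: "\<forall>i l c. 0 \<le> c \<and> c \<le> 1 \<longrightarrow>
        measure P0 (Op \<inter> {\<omega>\<in>space P0. \<zeta> i l \<omega> \<le> c}) = measure P0 Op * c"
    and indep: "prob_space.indep_sets (uniform_measure P0 Op) (src_sigma P0 Z0 R T Zf Kp \<zeta>) UNIV"
begin

abbreviation "m \<equiv> m1 + m2"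
abbreviation "obs \<equiv> obs_event P0 n1 n2 m \<nu> y Z0 R T"
abbreviation "src \<equiv> src_sigma P0 Z0 R T Zf Kp \<zeta>"

lemma prob_space_uniform_Op: "prob_space (uniform_measure P0 Op)"
  using Op_pos Op_ev by (intro prob_space_uniform_measure) (auto simp: emeasure_eq_measure)

lemma measure_uniform_Op: "X \<in> sets P0 \<Longrightarrow> measure (uniform_measure P0 Op) X = measure P0 (Op \<inter> X) / measure P0 Op"
  using Op_pos by (intro measure_uniform_measure) (auto simp: emeasure_eq_measure)

lemma src_sigma_in_sets:
  assumes "X \<in> src s"
  shows "X \<in> sets P0"
proof -
  interpret U: prob_space "uniform_measure P0 Op" by (rule prob_space_uniform_Op)
  show ?thesis using indep assms unfolding U.indep_sets_def by auto
qed

lemma sigma_algebra_src_sigma: "sigma_algebra (space P0) (src s)"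
  unfolding src_sigma_def by (cases s) (auto intro!: sigma_algebra_sigma_sets)

lemma Z0_level_in_lab: "{\<omega>\<in>space P0. Z0 \<omega> = z} \<in> src Lab"
  unfolding src_sigma_def by (auto intro!: sigma_sets.Basic)

lemma R_level_in_lab: "t \<in> {0..T} \<Longrightarrow> {\<omega>\<in>space P0. R \<omega> t i = c} \<in> src Lab"
  unfolding src_sigma_def by (auto intro!: sigma_sets.Basic)

lemma filter_level_in_filt: "{\<omega>\<in>space P0. Zf j \<omega> = z \<and> Kp j \<omega> = kk} \<in> src (Filt j)"
  unfolding src_sigma_def by (auto intro!: sigma_sets.Basic)

lemma zeta_le_in_unif: "{\<omega>\<in>space P0. \<zeta> i l \<omega> \<le> c} \<in> src (Unif i l)"
  unfolding src_sigma_def by (auto intro!: sigma_sets.Basic)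

lemma zeta_interval_in_unif: "{\<omega>\<in>space P0. a < \<zeta> i l \<omega> \<and> \<zeta> i l \<omega> \<le> b} \<in> src (Unif i l)"
proof -
  interpret S: sigma_algebra "space P0" "src (Unif i l)" by (rule sigma_algebra_src_sigma)
  have "{\<omega>\<in>space P0. a < \<zeta> i l \<omega> \<and> \<zeta> i l \<omega> \<le> b}
      = {\<omega>\<in>space P0. \<zeta> i l \<omega> \<le> b} - {\<omega>\<in>space P0. \<zeta> i l \<omega> \<le> a}"
    by auto
  then show ?thesis using S.Diff[OF zeta_le_in_unif zeta_le_in_unif] by simp
qed

lemma R_measurable: "t \<in> {0..T} \<Longrightarrow> (\<lambda>\<omega>. R \<omega> t i) \<in> measurable P0 (count_space UNIV)"
  unfolding measurable_count_space_eq2_countable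
  using R_level_in_lab src_sigma_in_sets by (auto simp: vimage_def Int_def conj_commute)

lemma counting_path_R: "\<omega> \<in> space P0 \<Longrightarrow> counting_path m T (R \<omega>)"
  using lab_vals by blast

lemma R_in_vecs: "\<omega> \<in> space P0 \<Longrightarrow> t \<in> {0..T} \<Longrightarrow> R \<omega> t \<in> vecs m"
  using counting_path_R unfolding counting_path_def by blast

lemma R_at_0: "\<omega> \<in> space P0 \<Longrightarrow> R \<omega> 0 = (\<lambda>_. 0)"
  using counting_path_R unfolding counting_path_def by blast

lemma R_mono:
  assumes "\<omega> \<in> space P0" "i < m" "s \<in> {0..T}" "t \<in> {0..T}" "s \<le> t"
  shows "R \<omega> s i \<le> R \<omega> t i"
proof -
  have "mono_on {0..T} (\<lambda>t. R \<omega> t i)"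
    using counting_path_R[OF assms(1)] assms(2) unfolding counting_path_def by blast
  then show ?thesis using assms(3-5) by (rule mono_onD)
qed

lemma obs_event_in_lab: "obs \<in> src Lab"
proof -
  interpret S: sigma_algebra "space P0" "src Lab" by (rule sigma_algebra_src_sigma)
  define Q where "Q = {zc \<in> vecs (n1+n2) \<times> vecs m.
    \<forall>i<n2. int (fst zc (n1+i)) + (\<Sum>j<m. \<nu> (n1+i) j * int (snd zc j)) = int (y i)}"
  have "countable Q"
    unfolding Q_def by (rule countable_subset[OF _ countable_SIGMA[OF countable_vecs countable_vecs]]) auto
  have "obs = {\<omega>\<in>space P0. \<exists>zc\<in>Q. Z0 \<omega> = fst zc \<and> (\<forall>j. j < m \<longrightarrow> R \<omega> T j = snd zc j)}"
  proof (intro set_eqI iffI)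
    fix \<omega> assume w: "\<omega> \<in> obs"
    then have "\<omega> \<in> space P0" unfolding obs_event_def by auto
    moreover have "(Z0 \<omega>, R \<omega> T) \<in> Q"
      using w lab_vals R_in_vecs[of \<omega> T] T_pos unfolding Q_def obs_event_def by auto
    ultimately show "\<omega> \<in> {\<omega>\<in>space P0. \<exists>zc\<in>Q. Z0 \<omega> = fst zc \<and> (\<forall>j. j < m \<longrightarrow> R \<omega> T j = snd zc j)}"
      by force
  next
    fix \<omega> assume "\<omega> \<in> {\<omega>\<in>space P0. \<exists>zc\<in>Q. Z0 \<omega> = fst zc \<and> (\<forall>j. j < m \<longrightarrow> R \<omega> T j = snd zc j)}"
    then obtain zc where \<omega>: "\<omega> \<in> space P0" and zc: "zc \<in> Q" "Z0 \<omega> = fst zc"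
      and RT: "\<forall>j<m. R \<omega> T j = snd zc j"
      by auto
    have "(\<Sum>j<m. \<nu> (n1+i) j * int (snd zc j)) = (\<Sum>j<m. \<nu> (n1+i) j * int (R \<omega> T j))" for i
      by (intro sum.cong) (simp_all add: RT)
    then show "\<omega> \<in> obs" using \<omega> zc unfolding Q_def obs_event_def by auto
  qed
  also have "\<dots> \<in> src Lab"
  proof (rule S.sets_Collect_countable_Ex'[OF _ \<open>countable Q\<close>])
    fix zc :: "(nat \<Rightarrow> nat) \<times> (nat \<Rightarrow> nat)"
    have "{\<omega>\<in>space P0. R \<omega> T j = snd zc j} \<in> src Lab" for j
      using T_pos by (intro R_level_in_lab) auto
    then have "{\<omega>\<in>space P0. j < m \<longrightarrow> R \<omega> T j = snd zc j} \<in> src Lab" for j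
      by (rule S.sets_Collect_imp[OF _ S.sets_Collect_const])
    then have "{\<omega>\<in>space P0. \<forall>j. j < m \<longrightarrow> R \<omega> T j = snd zc j} \<in> src Lab"
      by (rule S.sets_Collect_countable_All)
    then show "{\<omega>\<in>space P0. Z0 \<omega> = fst zc \<and> (\<forall>j. j < m \<longrightarrow> R \<omega> T j = snd zc j)} \<in> src Lab"
      by (rule S.sets_Collect_conj[OF _ Z0_level_in_lab])
  qed
  finally show ?thesis .
qed

lemma not_accepted_in_filt:
  "{\<omega>\<in>space P0. Kp j \<omega> \<notin> Sset n1 m1 m2 \<nu> (obs_gap n1 y (Zf j \<omega>))} \<in> src (Filt j)"
proof -
  interpret S: sigma_algebra "space P0" "src (Filt j)" by (rule sigma_algebra_src_sigma)
  let ?acc = "\<lambda>zk. snd zk \<in> Sset n1 m1 m2 \<nu> (obs_gap n1 y (fst zk))"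
  have "{\<omega>\<in>space P0. Kp j \<omega> \<in> Sset n1 m1 m2 \<nu> (obs_gap n1 y (Zf j \<omega>))}
      = {\<omega>\<in>space P0. \<exists>zk\<in>vecs (n1+n2) \<times> vecs m1. ?acc zk \<and> (Zf j \<omega> = fst zk \<and> Kp j \<omega> = snd zk)}"
  proof (intro Collect_cong conj_cong refl)
    fix \<omega> assume "\<omega> \<in> space P0"
    then have "(Zf j \<omega>, Kp j \<omega>) \<in> vecs (n1+n2) \<times> vecs m1" using filt_vals by blast
    then show "Kp j \<omega> \<in> Sset n1 m1 m2 \<nu> (obs_gap n1 y (Zf j \<omega>))
        \<longleftrightarrow> (\<exists>zk\<in>vecs (n1+n2) \<times> vecs m1. ?acc zk \<and> (Zf j \<omega> = fst zk \<and> Kp j \<omega> = snd zk))"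
      by force
  qed
  also have "\<dots> \<in> src (Filt j)"
  proof (rule S.sets_Collect_countable_Ex')
    show "countable (vecs (n1+n2) \<times> vecs m1 :: ((nat \<Rightarrow> nat) \<times> (nat \<Rightarrow> nat)) set)"
      by (intro countable_SIGMA countable_vecs)
    fix zk :: "(nat \<Rightarrow> nat) \<times> (nat \<Rightarrow> nat)"
    show "{\<omega>\<in>space P0. ?acc zk \<and> (Zf j \<omega> = fst zk \<and> Kp j \<omega> = snd zk)} \<in> src (Filt j)"
      by (rule S.sets_Collect_conj[OF filter_level_in_filt S.sets_Collect_const])
  qed
  finally show ?thesis by (rule S.sets_Collect_neg)
qed

lemma measure_uniform_Op_zeta_interval:
  assumes "0 \<le> a" "a \<le> b" "b \<le> 1"
  shows "measure (uniform_measure P0 Op) {\<omega>\<in>space P0. a < \<zeta> i l \<omega> \<and> \<zeta> i l \<omega> \<le> b} = b - a"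
proof -
  have sets: "Op \<inter> {\<omega>\<in>space P0. \<zeta> i l \<omega> \<le> c} \<in> sets P0" for c
    using Op_ev src_sigma_in_sets[OF zeta_le_in_unif] by auto
  have "Op \<inter> {\<omega>\<in>space P0. a < \<zeta> i l \<omega> \<and> \<zeta> i l \<omega> \<le> b}
      = (Op \<inter> {\<omega>\<in>space P0. \<zeta> i l \<omega> \<le> b}) - (Op \<inter> {\<omega>\<in>space P0. \<zeta> i l \<omega> \<le> a})"
    by auto
  also have "measure P0 \<dots> = measure P0 (Op \<inter> {\<omega>\<in>space P0. \<zeta> i l \<omega> \<le> b})
      - measure P0 (Op \<inter> {\<omega>\<in>space P0. \<zeta> i l \<omega> \<le> a})"
    using sets assms by (intro finite_measure_Diff) auto
  also have "\<dots> = measure P0 Op * (b - a)"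
    using zeta_law assms by (simp add: right_diff_distrib)
  finally have "measure P0 (Op \<inter> {\<omega>\<in>space P0. a < \<zeta> i l \<omega> \<and> \<zeta> i l \<omega> \<le> b}) = measure P0 Op * (b - a)" .
  then show ?thesis
    using measure_uniform_Op[OF src_sigma_in_sets[OF zeta_interval_in_unif]] Op_pos by simp
qed

lemma AE_zetas_in_unit_interval: "AE \<omega> in P0. \<omega> \<in> Op \<longrightarrow> (\<forall>i l. 0 < \<zeta> i l \<omega> \<and> \<zeta> i l \<omega> \<le> 1)"
proof -
  have "AE \<omega> in P0. \<omega> \<in> Op \<longrightarrow> 0 < \<zeta> i l \<omega> \<and> \<zeta> i l \<omega> \<le> 1" for i l
  proof -
    have "measure P0 (Op \<inter> {\<omega>\<in>space P0. 0 < \<zeta> i l \<omega> \<and> \<zeta> i l \<omega> \<le> 1}) = measure P0 Op"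
      using measure_uniform_Op_zeta_interval[of 0 1 i l]
        measure_uniform_Op[OF src_sigma_in_sets[OF zeta_interval_in_unif]] Op_pos by simp
    then have "measure P0 (Op - {\<omega>\<in>space P0. 0 < \<zeta> i l \<omega> \<and> \<zeta> i l \<omega> \<le> 1}) = 0"
      using Op_ev src_sigma_in_sets[OF zeta_interval_in_unif] by (simp add: finite_measure_Diff')
    then have "Op - {\<omega>\<in>space P0. 0 < \<zeta> i l \<omega> \<and> \<zeta> i l \<omega> \<le> 1} \<in> null_sets P0"
      using Op_ev src_sigma_in_sets[OF zeta_interval_in_unif]
      by (auto simp: null_sets_def emeasure_eq_measure)
    then show ?thesis
      by (rule AE_I') (use sets.sets_into_space[OF Op_ev] in auto)
  qed
  then have "AE \<omega> in P0. \<forall>i l. \<omega> \<in> Op \<longrightarrow> 0 < \<zeta> i l \<omega> \<and> \<zeta> i l \<omega> \<le> 1"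
    by (simp only: AE_all_countable) blast
  then show ?thesis by eventually_elim blast
qed

lemma Gvec_eqI:
  assumes "x \<in> vecs m2" and "\<forall>i<m2. (\<Sum>j<m2. real_of_int (\<nu> (n1+i) (m1+j)) * x j)
      = real_of_int (dy i) - (\<Sum>j<m1. real_of_int (\<nu> (n1+i) j) * real (kk j))"
  shows "Gvec n1 m1 m2 \<nu> dy kk = x"
  unfolding Gvec_def
proof (rule the1_equality)
  show "\<exists>!x. x \<in> vecs m2 \<and> (\<forall>i<m2. (\<Sum>j<m2. real_of_int (\<nu> (n1+i) (m1+j)) * x j)
      = real_of_int (dy i) - (\<Sum>j<m1. real_of_int (\<nu> (n1+i) j) * real (kk j)))"
    using B_inv unfolding block_invertible_def by (rule spec)
qed (use assms in simp)

lemma measure_lab_filter_unif_indep: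
  assumes Lo: "Lo \<in> src Lab" and Ph: "\<And>j. j \<le> n \<Longrightarrow> Ph j \<in> src (Filt j)"
    and fS: "finite S" and V: "\<And>i l. (i, l) \<in> S \<Longrightarrow> V i l \<in> src (Unif i l)"
  shows "measure (uniform_measure P0 Op) (Lo \<inter> (\<Inter>j\<le>n. Ph j) \<inter> (\<Inter>(i, l)\<in>S. V i l))
       = measure (uniform_measure P0 Op) (Lo \<inter> (\<Inter>j\<le>n. Ph j))
         * (\<Prod>(i, l)\<in>S. measure (uniform_measure P0 Op) (V i l))"
proof -
  interpret U: prob_space "uniform_measure P0 Op" by (rule prob_space_uniform_Op)
  define A where "A s = (case s of Lab \<Rightarrow> Lo | Filt j \<Rightarrow> Ph j | Unif i l \<Rightarrow> V i l)" for s
  define I0 where "I0 = insert Lab (Filt ` {..n})"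
  define IU where "IU = (\<lambda>(i, l). Unif i l) ` S"
  have fin: "finite I0" "finite IU" unfolding I0_def IU_def using fS by auto
  have A: "\<forall>s\<in>I0 \<union> IU. A s \<in> src s"
    unfolding I0_def IU_def A_def using Lo Ph V by auto
  have inj: "inj_on (\<lambda>(i, l). Unif i l) S" by (auto simp: inj_on_def)
  have I0: "(\<Inter>s\<in>I0. A s) = Lo \<inter> (\<Inter>j\<le>n. Ph j)"
    unfolding I0_def A_def by auto
  have IU: "(\<Inter>s\<in>IU. A s) = (\<Inter>(i, l)\<in>S. V i l)"
    unfolding IU_def A_def by (auto simp: split_beta)
  have "U.prob (Lo \<inter> (\<Inter>j\<le>n. Ph j) \<inter> (\<Inter>(i, l)\<in>S. V i l)) = U.prob (\<Inter>s\<in>I0 \<union> IU. A s)"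
    unfolding INT_Un I0 IU ..
  also have "\<dots> = (\<Prod>s\<in>I0 \<union> IU. U.prob (A s))"
    by (rule U.indep_setsD[OF indep]) (use fin A in \<open>auto simp: I0_def\<close>)
  also have "\<dots> = (\<Prod>s\<in>I0. U.prob (A s)) * (\<Prod>s\<in>IU. U.prob (A s))"
    using fin by (intro prod.union_disjoint) (auto simp: I0_def IU_def)
  also have "(\<Prod>s\<in>I0. U.prob (A s)) = U.prob (\<Inter>s\<in>I0. A s)"
    by (rule U.indep_setsD[OF indep, symmetric]) (use fin A in \<open>auto simp: I0_def\<close>)
  also have "(\<Prod>s\<in>IU. U.prob (A s)) = (\<Prod>(i, l)\<in>S. U.prob (V i l))"
    unfolding IU_def prod.reindex[OF inj] by (intro prod.cong) (auto simp: A_def)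
  finally show ?thesis unfolding I0 .
qed

end

locale conditioned_lab_filter_model = lab_filter_model +
  fixes k z0 :: "nat \<Rightarrow> nat"
  assumes k_vec: "k \<in> vecs (m1+m2)" and z0_vec: "z0 \<in> vecs (n1+n2)"
    and condR_pos: "measure P0 ({\<omega>\<in>space P0. R \<omega> T = k \<and> Z0 \<omega> = z0}
                       \<inter> (Op \<inter> obs_event P0 n1 n2 (m1+m2) \<nu> y Z0 R T)) > 0"
    and condI_pos: "measure P0 ({\<omega>\<in>space P0. interp_I n1 m1 m2 \<nu> y T lam Zf Kp \<zeta> \<omega> T = k
                                  \<and> Ztil0 n1 m1 m2 \<nu> y Zf Kp \<omega> = z0}
                       \<inter> (Op \<inter> obs_event P0 n1 n2 (m1+m2) \<nu> y Z0 R T)) > 0"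
begin

abbreviation "\<eta> i \<equiv> eta lam y i z0"

lemma eta_eq_indefinite_integral: "\<eta> i = (\<lambda>t. LINT s:{0..t}|lborel. lam s z0 y i)"
  by (simp add: fun_eq_iff eta_def)

lemma lam_z0_pos: "i < m \<Longrightarrow> t \<in> {0..T} \<Longrightarrow> 0 < lam t z0 y i"
  using lam_pos z0_vec y_vec by auto

lemma lam_z0_integrable: "i < m \<Longrightarrow> set_integrable lborel {0..T} (\<lambda>t. lam t z0 y i)"
  using lam_int z0_vec y_vec by auto

lemma eta_strict_mono: "i < m \<Longrightarrow> strict_mono_on {0..T} (\<eta> i)"
  unfolding eta_eq_indefinite_integral
  by (intro strict_mono_on_indefinite_set_integral lam_z0_pos lam_z0_integrable)

lemma eta_continuous: "i < m \<Longrightarrow> continuous_on {0..T} (\<eta> i)"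
  unfolding eta_eq_indefinite_integral
  by (intro continuous_on_indefinite_set_integral lam_z0_pos lam_z0_integrable)

lemma eta_0: "\<eta> i 0 = 0"
  unfolding eta_def by (rule set_integral_point)

lemma eta_T_pos: "i < m \<Longrightarrow> 0 < \<eta> i T"
  using strict_mono_onD[OF eta_strict_mono, of i 0 T] T_pos eta_0 by simp

lemma eta_le_iff: "i < m \<Longrightarrow> s \<in> {0..T} \<Longrightarrow> t \<in> {0..T} \<Longrightarrow> \<eta> i s \<le> \<eta> i t \<longleftrightarrow> s \<le> t"
  by (rule strict_mono_on_less_eq[OF eta_strict_mono])

lemma set_integral_lam_eq_eta_diff:
  "i < m \<Longrightarrow> 0 \<le> a \<Longrightarrow> a \<le> b \<Longrightarrow> b \<le> T \<Longrightarrow> (LINT u:{a..b}|lborel. lam u z0 y i) = \<eta> i b - \<eta> i a"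
  unfolding eta_def
  using indefinite_set_integral_split[OF lam_z0_pos lam_z0_integrable, of i a b] by simp

lemma eta_inv_le_iff:
  assumes i: "i < m" and c: "0 \<le> c" "c \<le> 1" and t: "t \<in> {0..T}"
  shows "eta_inv lam y T i z0 (c * \<eta> i T) \<le> t \<longleftrightarrow> c \<le> \<eta> i t / \<eta> i T"
proof -
  have "eta_inv lam y T i z0 (c * \<eta> i T) \<le> t \<longleftrightarrow> c * \<eta> i T \<le> \<eta> i t"
    unfolding eta_inv_def
    using strict_mono_on_inverse_le_iff[OF eta_strict_mono[OF i] eta_continuous[OF i], of "c * \<eta> i T" t]
      c t eta_0 eta_T_pos[OF i] by (simp add: mult_le_cancel_right1)
  also have "\<dots> \<longleftrightarrow> c \<le> \<eta> i t / \<eta> i T"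
    using eta_T_pos[OF i] by (simp add: pos_le_divide_eq)
  finally show ?thesis .
qed

definition "lab_event = {\<omega>\<in>space P0. R \<omega> T = k \<and> Z0 \<omega> = z0} \<inter> (Op \<inter> obs)"
definition "start_event = Op \<inter> {\<omega>\<in>space P0. Z0 \<omega> = z0}"

definition poisson_grid_prob :: "nat \<Rightarrow> (nat \<Rightarrow> real) \<Rightarrow> (nat \<Rightarrow> nat \<Rightarrow> nat) \<Rightarrow> real" where
  "poisson_grid_prob r ts a = (\<Prod>i<m. \<Prod>j<r. poisson_prob (\<eta> i (ts (Suc j)) - \<eta> i (ts j)) (a i j))"

lemma measure_lab_event_pos: "0 < measure P0 lab_event"
  using condR_pos unfolding lab_event_def .

lemma lab_event_in_sets: "lab_event \<in> sets P0"
  using measure_lab_event_pos measure_notin_sets by fastforce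

lemma obs_equation_k:
  assumes "i < n2"
  shows "int (z0 (n1+i)) + (\<Sum>j<m. \<nu> (n1+i) j * int (k j)) = int (y i)"
proof -
  obtain \<omega> where "\<omega> \<in> lab_event"
    using measure_lab_event_pos by (metis equals0I measure_empty less_irrefl)
  then show ?thesis using assms unfolding lab_event_def obs_event_def by auto
qed

lemma in_obs_if_start_k: "\<omega> \<in> space P0 \<Longrightarrow> Z0 \<omega> = z0 \<Longrightarrow> R \<omega> T = k \<Longrightarrow> \<omega> \<in> obs"
  unfolding obs_event_def using obs_equation_k by auto

context
  fixes r :: nat and ts :: "nat \<Rightarrow> real"
  assumes ts_0: "ts 0 = 0" and ts_r: "ts r = T" and ts_mono: "\<And>j. j < r \<Longrightarrow> ts j \<le> ts (Suc j)"
begin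

private lemma ts_in_interval: "j \<le> r \<Longrightarrow> ts j \<in> {0..T}"
  by (rule grid_point_in_interval[OF ts_0 ts_r ts_mono])

lemma lab_event_monotone_grid_path:
  assumes "\<omega> \<in> lab_event"
  shows "monotone_grid_path m r ts k (R \<omega>)"
  using assms R_at_0 R_in_vecs R_mono[of \<omega> _ "ts _" "ts (Suc _)"] ts_in_interval ts_mono ts_0 ts_r
  unfolding lab_event_def monotone_grid_path_def by auto

lemma lab_event_inter_grid_increments:
  assumes a: "\<And>i. i < m \<Longrightarrow> (\<Sum>j<r. a i j) = k i"
  shows "lab_event \<inter> {\<omega>\<in>space P0. has_grid_increments m r ts (R \<omega>) a}
       = start_event \<inter> {\<omega>\<in>space P0. \<forall>i<m. \<forall>j<r. R \<omega> (ts (Suc j)) i = R \<omega> (ts j) i + a i j}"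
proof (intro set_eqI iffI)
  fix \<omega> assume "\<omega> \<in> start_event \<inter> {\<omega>\<in>space P0. \<forall>i<m. \<forall>j<r. R \<omega> (ts (Suc j)) i = R \<omega> (ts j) i + a i j}"
  then have \<omega>: "\<omega> \<in> space P0" "Z0 \<omega> = z0" "\<omega> \<in> Op" and inc: "has_grid_increments m r ts (R \<omega>) a"
    unfolding start_event_def has_grid_increments_def by auto
  have "R \<omega> (ts r) = increment_partial_sum m a r"
    using R_at_0[OF \<omega>(1)] R_in_vecs[OF \<omega>(1)] ts_in_interval ts_0
    by (intro grid_path_eq_increment_partial_sum[OF _ _ inc]) auto
  also have "\<dots> = k"
    using a k_vec unfolding increment_partial_sum_def vecs_def by (auto simp: fun_eq_iff)
  finally show "\<omega> \<in> lab_event \<inter> {\<omega>\<in>space P0. has_grid_increments m r ts (R \<omega>) a}"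
    using \<omega> inc in_obs_if_start_k[OF \<omega>(1,2)] ts_r unfolding lab_event_def by auto
qed (auto simp: lab_event_def start_event_def has_grid_increments_def)

lemma measure_lab_event_grid_increments:
  assumes "\<And>i. i < m \<Longrightarrow> (\<Sum>j<r. a i j) = k i"
  shows "measure P0 (lab_event \<inter> {\<omega>\<in>space P0. has_grid_increments m r ts (R \<omega>) a})
       = measure P0 start_event * poisson_grid_prob r ts a"
proof -
  have "measure P0 (start_event \<inter> {\<omega>\<in>space P0. \<forall>i<m. \<forall>j<r. R \<omega> (ts (Suc j)) i = R \<omega> (ts j) i + a i j})
      = measure P0 start_event
        * (\<Prod>i<m. \<Prod>j<r. poisson_prob (LINT u:{ts j..ts (Suc j)}|lborel. lam u z0 y i) (a i j))"
    using R_law z0_vec ts_0 ts_mono ts_in_interval[of r]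
    unfolding start_event_def cond_poisson_process_def by auto
  also have "(\<Prod>i<m. \<Prod>j<r. poisson_prob (LINT u:{ts j..ts (Suc j)}|lborel. lam u z0 y i) (a i j))
      = poisson_grid_prob r ts a"
    unfolding poisson_grid_prob_def
    using ts_in_interval ts_mono by (intro prod.cong refl) (simp add: set_integral_lam_eq_eta_diff)
  finally show ?thesis
    using lab_event_inter_grid_increments[OF assms] by simp
qed

end

lemma measure_lab_event:
  "measure P0 lab_event = measure P0 start_event * (\<Prod>i<m. poisson_prob (\<eta> i T) (k i))"
proof -
  let ?ts = "\<lambda>j::nat. real j * T"
  have "lab_event \<inter> {\<omega>\<in>space P0. has_grid_increments m 1 ?ts (R \<omega>) (\<lambda>i j. k i)} = lab_event"
    using R_at_0 unfolding lab_event_def has_grid_increments_def by auto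
  moreover have "measure P0 (lab_event \<inter> {\<omega>\<in>space P0. has_grid_increments m 1 ?ts (R \<omega>) (\<lambda>i j. k i)})
      = measure P0 start_event * poisson_grid_prob 1 ?ts (\<lambda>i j. k i)"
    using T_pos by (intro measure_lab_event_grid_increments) auto
  ultimately show ?thesis
    by (simp add: poisson_grid_prob_def eta_0)
qed

abbreviation "interp \<omega> \<equiv> interp_I n1 m1 m2 \<nu> y T lam Zf Kp \<zeta> \<omega>"
abbreviation "filter_start \<omega> \<equiv> Ztil0 n1 m1 m2 \<nu> y Zf Kp \<omega>"
abbreviation "filter_counts \<omega> \<equiv> Kfull n1 m1 m2 \<nu> y Zf Kp \<omega>"
abbreviation "filter_index \<omega> \<equiv> sel_index n1 m1 m2 \<nu> y Zf Kp \<omega>"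
abbreviation "accepted \<omega> j \<equiv> Kp j \<omega> \<in> Sset n1 m1 m2 \<nu> (obs_gap n1 y (Zf j \<omega>))"

definition "filter_event = {\<omega>\<in>space P0. interp \<omega> T = k \<and> filter_start \<omega> = z0} \<inter> (Op \<inter> obs)"
definition "k' = (\<lambda>j. if j < m1 then k j else 0)"
definition "selected_at n = {\<omega>\<in>space P0. \<forall>j<n. \<not> accepted \<omega> j}
    \<inter> {\<omega>\<in>space P0. Zf n \<omega> = z0 \<and> Kp n \<omega> = k'} \<inter> (Op \<inter> obs)"
definition "selected = (\<Union>n. selected_at n)"
definition "unit_zetas = {\<omega>\<in>space P0. \<forall>i<m. \<forall>l<k i. 0 < \<zeta> i l \<omega> \<and> \<zeta> i l \<omega> \<le> 1}"
definition "filter_core = selected \<inter> unit_zetas"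

text \<open>On \<open>filter_core\<close> the interpolated filter process coincides with this path, which no
  longer involves the filter variables.\<close>
definition "fixed_interp \<omega> t i = (if i < m then card {l. l < k i \<and> \<zeta> i l \<omega> \<le> \<eta> i t / \<eta> i T} else 0)"

lemma Gvec_k': "Gvec n1 m1 m2 \<nu> (obs_gap n1 y z0) k' = (\<lambda>i. if i < m2 then real (k (m1 + i)) else 0)"
proof (rule Gvec_eqI)
  show "(\<lambda>i. if i < m2 then real (k (m1 + i)) else 0) \<in> vecs m2" by (simp add: vecs_def)
  show "\<forall>i<m2. (\<Sum>j<m2. real_of_int (\<nu> (n1+i) (m1+j)) * (if j < m2 then real (k (m1 + j)) else 0))
      = real_of_int (obs_gap n1 y z0 i) - (\<Sum>j<m1. real_of_int (\<nu> (n1+i) j) * real (k' j))"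
  proof (intro allI impI)
    fix i assume "i < m2"
    then have "real_of_int (int (z0 (n1+i)) + (\<Sum>j<m. \<nu> (n1+i) j * int (k j))) = real_of_int (int (y i))"
      using obs_equation_k[of i] dims by simp
    then show "(\<Sum>j<m2. real_of_int (\<nu> (n1+i) (m1+j)) * (if j < m2 then real (k (m1 + j)) else 0))
      = real_of_int (obs_gap n1 y z0 i) - (\<Sum>j<m1. real_of_int (\<nu> (n1+i) j) * real (k' j))"
      unfolding obs_gap_def k'_def by (simp add: of_int_sum sum_lessThan_add_eq algebra_simps)
  qed
qed

lemma k'_accepted: "k' \<in> Sset n1 m1 m2 \<nu> (obs_gap n1 y z0)"
  unfolding Sset_def using Gvec_k' by (auto simp: k'_def vecs_def)

lemma selected_at_index: "\<omega> \<in> selected_at n \<Longrightarrow> filter_index \<omega> = n"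
  unfolding sel_index_def selected_at_def using k'_accepted
  by (intro Least_equality) (auto simp: not_less[symmetric])

lemma selected_at_start: "\<omega> \<in> selected_at n \<Longrightarrow> filter_start \<omega> = z0"
  unfolding Ztil0_def using selected_at_index[of \<omega> n] by (simp add: selected_at_def)

lemma selected_at_counts:
  assumes "\<omega> \<in> selected_at n"
  shows "filter_counts \<omega> = k"
proof
  fix j
  have "Zf n \<omega> = z0" "Kp n \<omega> = k'" using assms by (auto simp: selected_at_def)
  then show "filter_counts \<omega> j = k j"
    using selected_at_index[OF assms] Gvec_k' k_vec
    unfolding Kfull_def Let_def k'_def vecs_def by (auto simp: not_less)
qed

lemma disjoint_family_selected_at: "disjoint_family selected_at"
  unfolding disjoint_family_on_def using selected_at_index by blast

definition "selection_factor n j = (if j < n then {\<omega>\<in>space P0. \<not> accepted \<omega> j}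
    else {\<omega>\<in>space P0. Zf n \<omega> = z0 \<and> Kp n \<omega> = k'})"

lemma selection_factor_in_filt: "j \<le> n \<Longrightarrow> selection_factor n j \<in> src (Filt j)"
  using not_accepted_in_filt filter_level_in_filt[of n z0 k'] unfolding selection_factor_def
  by (cases "j < n") auto

lemma selected_at_eq_INT: "selected_at n = Op \<inter> (obs \<inter> (\<Inter>j\<le>n. selection_factor n j))"
proof (intro set_eqI iffI)
  fix \<omega> assume \<omega>: "\<omega> \<in> selected_at n"
  have "\<omega> \<in> selection_factor n j" if "j \<le> n" for j
    using \<omega> that unfolding selected_at_def selection_factor_def by (cases "j < n") auto
  then show "\<omega> \<in> Op \<inter> (obs \<inter> (\<Inter>j\<le>n. selection_factor n j))"
    using \<omega> unfolding selected_at_def by simp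
next
  fix \<omega> assume \<omega>: "\<omega> \<in> Op \<inter> (obs \<inter> (\<Inter>j\<le>n. selection_factor n j))"
  then have factor: "\<omega> \<in> selection_factor n j" if "j \<le> n" for j
    using that by simp
  have "\<not> accepted \<omega> j" if "j < n" for j
    using factor[of j] that by (simp add: selection_factor_def)
  moreover have "Zf n \<omega> = z0 \<and> Kp n \<omega> = k'"
    using factor[of n] by (simp add: selection_factor_def)
  ultimately show "\<omega> \<in> selected_at n"
    using \<omega> unfolding selected_at_def obs_event_def by auto
qed

lemma interp_eq_card:
  assumes start: "filter_start \<omega> = z0"
    and unit: "\<forall>i<m. \<forall>l<filter_counts \<omega> i. 0 < \<zeta> i l \<omega> \<and> \<zeta> i l \<omega> \<le> 1" and t: "t \<in> {0..T}"
  shows "interp \<omega> t i = (if i < m then card {l. l < filter_counts \<omega> i \<and> \<zeta> i l \<omega> \<le> \<eta> i t / \<eta> i T} else 0)"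
proof (cases "i < m")
  case True
  have "{l. l < filter_counts \<omega> i \<and> eta_inv lam y T i z0 (\<zeta> i l \<omega> * \<eta> i T) \<le> t}
      = {l. l < filter_counts \<omega> i \<and> \<zeta> i l \<omega> \<le> \<eta> i t / \<eta> i T}"
  proof (intro Collect_cong conj_cong refl)
    fix l assume "l < filter_counts \<omega> i"
    then have "0 \<le> \<zeta> i l \<omega>" "\<zeta> i l \<omega> \<le> 1" using unit True by (auto intro: less_imp_le)
    then show "eta_inv lam y T i z0 (\<zeta> i l \<omega> * \<eta> i T) \<le> t \<longleftrightarrow> \<zeta> i l \<omega> \<le> \<eta> i t / \<eta> i T"
      by (rule eta_inv_le_iff[OF True _ _ t])
  qed
  then show ?thesis unfolding interp_I_def Let_def start using True by simp
qed (simp add: interp_I_def)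

lemma interp_T:
  assumes "filter_start \<omega> = z0" and "\<forall>i<m. \<forall>l<filter_counts \<omega> i. 0 < \<zeta> i l \<omega> \<and> \<zeta> i l \<omega> \<le> 1"
  shows "interp \<omega> T i = (if i < m then filter_counts \<omega> i else 0)"
proof (cases "i < m")
  case True
  have "{l. l < filter_counts \<omega> i \<and> \<zeta> i l \<omega> \<le> \<eta> i T / \<eta> i T} = {..<filter_counts \<omega> i}"
    using assms(2) True eta_T_pos[OF True] by auto
  then show ?thesis using interp_eq_card[OF assms, of T i] T_pos True by simp
qed (use interp_eq_card[OF assms, of T i] T_pos in simp)

lemma filter_event_subset_selected:
  assumes \<omega>: "\<omega> \<in> filter_event" and unit: "\<forall>i l. 0 < \<zeta> i l \<omega> \<and> \<zeta> i l \<omega> \<le> 1"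
  shows "\<omega> \<in> selected"
proof -
  define n where "n = filter_index \<omega>"
  have \<omega>': "\<omega> \<in> space P0" "filter_start \<omega> = z0" "interp \<omega> T = k" "\<omega> \<in> Op \<inter> obs"
    using \<omega> by (auto simp: filter_event_def)
  then have Zf: "Zf n \<omega> = z0" unfolding Ztil0_def n_def by simp
  have "Kp n \<omega> j = k' j" for j
    using interp_T[OF \<omega>'(2), of j] unit \<omega>'(3) filt_vals \<omega>'(1)
    unfolding k'_def Kfull_def Let_def n_def vecs_def by (auto split: if_splits)
  then have Kp: "Kp n \<omega> = k'" by auto
  have "\<forall>j<n. \<not> accepted \<omega> j"
    unfolding n_def sel_index_def using not_less_Least by blast
  then have "\<omega> \<in> selected_at n" unfolding selected_at_def using \<omega>' Zf Kp by simp
  then show ?thesis unfolding selected_def by blast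
qed

lemma filter_core_interp:
  assumes "\<omega> \<in> filter_core" and "t \<in> {0..T}"
  shows "interp \<omega> t = fixed_interp \<omega> t"
proof -
  obtain n where n: "\<omega> \<in> selected_at n" "\<omega> \<in> unit_zetas"
    using assms unfolding filter_core_def selected_def by blast
  show ?thesis
    using interp_eq_card[OF selected_at_start[OF n(1)], of t] selected_at_counts[OF n(1)] n(2) assms(2)
    unfolding unit_zetas_def fixed_interp_def by auto
qed

lemma filter_core_subset_filter_event: "filter_core \<subseteq> filter_event"
proof
  fix \<omega> assume \<omega>: "\<omega> \<in> filter_core"
  then obtain n where n: "\<omega> \<in> selected_at n" "\<omega> \<in> unit_zetas"
    unfolding filter_core_def selected_def by blast
  have "interp \<omega> T = k"
    using interp_T[OF selected_at_start[OF n(1)]] selected_at_counts[OF n(1)] n(2) k_vec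
    unfolding unit_zetas_def vecs_def by auto
  then show "\<omega> \<in> filter_event"
    using n(1) selected_at_start[OF n(1)] unfolding filter_event_def selected_at_def by auto
qed

lemma selected_at_in_sets: "selected_at n \<in> sets P0"
proof -
  have "{\<omega>\<in>space P0. j < n \<longrightarrow> \<not> accepted \<omega> j} \<in> sets P0" for j
    by (rule sets.sets_Collect_imp[OF src_sigma_in_sets[OF not_accepted_in_filt] sets.sets_Collect_const])
  then have "{\<omega>\<in>space P0. \<forall>j<n. \<not> accepted \<omega> j} \<in> sets P0"
    by (rule sets.sets_Collect_countable_All)
  then show ?thesis
    unfolding selected_at_def
    by (rule sets.Int[OF sets.Int[OF _ src_sigma_in_sets[OF filter_level_in_filt]]
          sets.Int[OF Op_ev src_sigma_in_sets[OF obs_event_in_lab]]])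
qed

lemma selected_in_sets: "selected \<in> sets P0"
  unfolding selected_def using selected_at_in_sets by auto

lemma unit_zetas_in_sets: "unit_zetas \<in> sets P0"
proof -
  have "{\<omega>\<in>space P0. l < k i \<longrightarrow> 0 < \<zeta> i l \<omega> \<and> \<zeta> i l \<omega> \<le> 1} \<in> sets P0" for i l
    using src_sigma_in_sets[OF zeta_interval_in_unif] by (intro sets.sets_Collect_imp sets.sets_Collect_const)
  then have "{\<omega>\<in>space P0. i < m \<longrightarrow> (\<forall>l<k i. 0 < \<zeta> i l \<omega> \<and> \<zeta> i l \<omega> \<le> 1)} \<in> sets P0" for i
    by (rule sets.sets_Collect_imp[OF sets.sets_Collect_countable_All sets.sets_Collect_const])
  then show ?thesis
    unfolding unit_zetas_def by (intro sets.sets_Collect_countable_All)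
qed

lemma filter_core_in_sets: "filter_core \<in> sets P0"
  unfolding filter_core_def using selected_in_sets unit_zetas_in_sets by simp

lemma filter_event_in_sets: "filter_event \<in> sets P0"
  using condI_pos measure_notin_sets unfolding filter_event_def by fastforce

lemma selected_subset_Op: "selected \<subseteq> Op"
  unfolding selected_def selected_at_def by auto

lemma AE_filter_event_iff_core: "AE \<omega> in P0. \<omega> \<in> filter_event \<longleftrightarrow> \<omega> \<in> filter_core"
  using AE_zetas_in_unit_interval
proof eventually_elim
  case (elim \<omega>)
  then show ?case
    using filter_event_subset_selected filter_core_subset_filter_event
    unfolding filter_event_def filter_core_def unit_zetas_def by blast
qed

lemma AE_selected_iff_core: "AE \<omega> in P0. \<omega> \<in> selected \<longleftrightarrow> \<omega> \<in> filter_core"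
  using AE_zetas_in_unit_interval
proof eventually_elim
  case (elim \<omega>)
  then show ?case
    using selected_subset_Op selected_in_sets sets.sets_into_space
    unfolding filter_core_def unit_zetas_def by blast
qed

lemma measure_filter_core_pos: "0 < measure P0 filter_core"
  using condI_pos measure_eq_AE[OF AE_filter_event_iff_core filter_event_in_sets filter_core_in_sets]
  unfolding filter_event_def by simp

lemma measure_selected_eq_core: "measure P0 selected = measure P0 filter_core"
  by (rule measure_eq_AE[OF AE_selected_iff_core selected_in_sets filter_core_in_sets])

lemma fixed_interp_measurable: "(\<lambda>\<omega>. fixed_interp \<omega> t i) \<in> measurable P0 (count_space UNIV)"
proof -
  have "(\<lambda>\<omega>. real (fixed_interp \<omega> t i)) \<in> borel_measurable P0"
  proof (cases "i < m")
    case True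
    have eq: "real (fixed_interp \<omega> t i) = (\<Sum>l<k i. if \<zeta> i l \<omega> \<le> \<eta> i t / \<eta> i T then 1 else 0)"
      for \<omega>
      unfolding fixed_interp_def if_P[OF True] by (rule real_card_lessThan_filter)
    show ?thesis
      unfolding eq
      by (intro borel_measurable_sum measurable_If measurable_const src_sigma_in_sets[OF zeta_le_in_unif]) simp_all
  qed (simp add: fixed_interp_def)
  then have "(\<lambda>\<omega>. real (fixed_interp \<omega> t i)) -` {real c} \<inter> space P0 \<in> sets P0" for c
    by (rule measurable_sets) simp
  moreover have "(\<lambda>\<omega>. real (fixed_interp \<omega> t i)) -` {real c} = (\<lambda>\<omega>. fixed_interp \<omega> t i) -` {c}" for c
    by auto
  ultimately show ?thesis by (simp add: measurable_count_space_eq2_countable)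
qed

end

locale conditioned_grid = conditioned_lab_filter_model +
  fixes r :: nat and ts :: "nat \<Rightarrow> real"
  assumes ts_0: "ts 0 = 0" and ts_r: "ts r = T" and ts_less: "\<And>j. j < r \<Longrightarrow> ts j < ts (Suc j)"
begin

lemma ts_mono: "j < r \<Longrightarrow> ts j \<le> ts (Suc j)"
  using ts_less by (simp add: less_imp_le)

lemma ts_le: "i \<le> j \<Longrightarrow> j \<le> r \<Longrightarrow> ts i \<le> ts j"
  by (rule monotone_grid_le[where r=r and ts=ts, OF ts_mono])

lemma ts_in_interval: "j \<le> r \<Longrightarrow> ts j \<in> {0..T}"
  by (rule grid_point_in_interval[OF ts_0 ts_r ts_mono])

definition grid_fraction :: "nat \<Rightarrow> nat \<Rightarrow> real" where
  "grid_fraction i j = \<eta> i (ts j) / \<eta> i T"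

abbreviation "cell i x \<equiv> partition_cell (grid_fraction i) x"

lemma grid_fraction_mono: "i < m \<Longrightarrow> j \<le> j' \<Longrightarrow> j' \<le> r \<Longrightarrow> grid_fraction i j \<le> grid_fraction i j'"
  unfolding grid_fraction_def
  using eta_le_iff[OF _ ts_in_interval ts_in_interval, of i j j'] ts_le eta_T_pos[of i]
  by (simp add: divide_right_mono)

lemma grid_fraction_0: "grid_fraction i 0 = 0"
  unfolding grid_fraction_def ts_0 eta_0 by simp

lemma grid_fraction_r: "i < m \<Longrightarrow> grid_fraction i r = 1"
  unfolding grid_fraction_def ts_r using eta_T_pos[of i] by simp

lemma grid_fraction_in_unit: "i < m \<Longrightarrow> j \<le> r \<Longrightarrow> 0 \<le> grid_fraction i j \<and> grid_fraction i j \<le> 1"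
  using grid_fraction_mono[of i 0 j] grid_fraction_mono[of i j r] grid_fraction_0 grid_fraction_r by simp

lemma cell_bounds:
  assumes "i < m" "0 < x" "x \<le> 1"
  shows "cell i x < r" "grid_fraction i (cell i x) < x" "x \<le> grid_fraction i (Suc (cell i x))"
  using partition_cell_bounds[OF grid_fraction_mono[OF assms(1)] grid_fraction_0 grid_fraction_r[OF assms(1)]]
    assms(2,3) by auto

lemma le_grid_fraction_iff:
  assumes "i < m" "0 < x" "x \<le> 1" "j \<le> r"
  shows "x \<le> grid_fraction i j \<longleftrightarrow> cell i x < j"
  using le_partition_point_iff[OF grid_fraction_mono[OF assms(1)] grid_fraction_0 grid_fraction_r[OF assms(1)]]
    assms(2-4) by auto

lemma cell_eqI:
  assumes "i < m" "j < r" "grid_fraction i j < x" "x \<le> grid_fraction i (Suc j)"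
  shows "cell i x = j"
  using partition_cell_eqI[OF grid_fraction_mono[OF assms(1)] grid_fraction_0 grid_fraction_r[OF assms(1)]]
    assms(2-4) by auto

definition "cell_list i \<omega> = map (\<lambda>l. cell i (\<zeta> i l \<omega>)) [0..<k i]"

lemma unit_zetasD: "\<omega> \<in> unit_zetas \<Longrightarrow> i < m \<Longrightarrow> l < k i \<Longrightarrow> 0 < \<zeta> i l \<omega> \<and> \<zeta> i l \<omega> \<le> 1"
  unfolding unit_zetas_def by auto

lemma fixed_interp_at_grid:
  assumes \<omega>: "\<omega> \<in> unit_zetas" and i: "i < m" and j: "j \<le> r"
  shows "fixed_interp \<omega> (ts j) i = card {l. l < k i \<and> cell i (\<zeta> i l \<omega>) < j}"
proof -
  have "{l. l < k i \<and> \<zeta> i l \<omega> \<le> grid_fraction i j} = {l. l < k i \<and> cell i (\<zeta> i l \<omega>) < j}"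
    using le_grid_fraction_iff[OF i _ _ j] unit_zetasD[OF \<omega> i] by blast
  then show ?thesis
    unfolding fixed_interp_def grid_fraction_def using i by simp
qed

lemma fixed_interp_grid_step:
  assumes \<omega>: "\<omega> \<in> unit_zetas" and i: "i < m" and j: "j < r"
  shows "fixed_interp \<omega> (ts (Suc j)) i = fixed_interp \<omega> (ts j) i + card {l. l < k i \<and> cell i (\<zeta> i l \<omega>) = j}"
proof -
  have "{l. l < k i \<and> cell i (\<zeta> i l \<omega>) < Suc j}
      = {l. l < k i \<and> cell i (\<zeta> i l \<omega>) < j} \<union> {l. l < k i \<and> cell i (\<zeta> i l \<omega>) = j}"
    by auto
  then have "card {l. l < k i \<and> cell i (\<zeta> i l \<omega>) < Suc j}
      = card {l. l < k i \<and> cell i (\<zeta> i l \<omega>) < j} + card {l. l < k i \<and> cell i (\<zeta> i l \<omega>) = j}"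
    by (simp add: card_Un_disjoint disjoint_iff)
  then show ?thesis
    using fixed_interp_at_grid[OF \<omega> i] j by simp
qed

lemma fixed_interp_monotone_grid_path:
  assumes \<omega>: "\<omega> \<in> unit_zetas"
  shows "monotone_grid_path m r ts k (fixed_interp \<omega>)"
proof -
  have "fixed_interp \<omega> (ts 0) = (\<lambda>_. 0)"
    using fixed_interp_at_grid[OF \<omega> _ le0] by (auto simp: fixed_interp_def)
  moreover have "fixed_interp \<omega> (ts r) i = k i" for i
  proof (cases "i < m")
    case True
    have "{l. l < k i \<and> cell i (\<zeta> i l \<omega>) < r} = {..<k i}"
      using cell_bounds(1)[OF True] unit_zetasD[OF \<omega> True] by auto
    then show ?thesis using fixed_interp_at_grid[OF \<omega> True order_refl] by simp
  next
    case False
    then show ?thesis using k_vec unfolding fixed_interp_def vecs_def by simp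
  qed
  ultimately show ?thesis
    using fixed_interp_grid_step[OF \<omega>]
    unfolding monotone_grid_path_def by (auto simp: fixed_interp_def vecs_def)
qed

lemma count_cell_list: "count (mset (cell_list i \<omega>)) j = card {l. l < k i \<and> cell i (\<zeta> i l \<omega>) = j}"
  unfolding cell_list_def by (rule count_mset_map_upt)

lemma fixed_interp_increments_iff:
  assumes \<omega>: "\<omega> \<in> unit_zetas"
  shows "has_grid_increments m r ts (fixed_interp \<omega>) a \<longleftrightarrow> (\<forall>i<m. mset (cell_list i \<omega>) = mset_of_counts r (a i))"
proof -
  have beyond: "count (mset (cell_list i \<omega>)) j = 0" if "i < m" "r \<le> j" for i j
  proof -
    have "{l. l < k i \<and> cell i (\<zeta> i l \<omega>) = j} = {}"
      using cell_bounds(1)[OF that(1)] unit_zetasD[OF \<omega> that(1)] that(2) by force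
    then show ?thesis unfolding count_cell_list by simp
  qed
  have step: "fixed_interp \<omega> (ts (Suc j)) i = fixed_interp \<omega> (ts j) i + count (mset (cell_list i \<omega>)) j"
    if "i < m" "j < r" for i j
    using fixed_interp_grid_step[OF \<omega> that] unfolding count_cell_list .
  show ?thesis
  proof
    assume inc: "has_grid_increments m r ts (fixed_interp \<omega>) a"
    show "\<forall>i<m. mset (cell_list i \<omega>) = mset_of_counts r (a i)"
    proof (intro allI impI multiset_eqI)
      fix i j assume i: "i < m"
      show "count (mset (cell_list i \<omega>)) j = count (mset_of_counts r (a i)) j"
      proof (cases "j < r")
        case True
        then show ?thesis
          using inc step[OF i True] i unfolding has_grid_increments_def count_mset_of_counts by simp
      next
        case False
        then show ?thesis using beyond[OF i] by (simp add: count_mset_of_counts)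
      qed
    qed
  next
    assume cells: "\<forall>i<m. mset (cell_list i \<omega>) = mset_of_counts r (a i)"
    show "has_grid_increments m r ts (fixed_interp \<omega>) a"
      unfolding has_grid_increments_def
    proof (intro allI impI)
      fix i j assume i: "i < m" and j: "j < r"
      have "a i j = count (mset (cell_list i \<omega>)) j"
        using cells i j by (simp add: count_mset_of_counts)
      then show "fixed_interp \<omega> (ts (Suc j)) i = fixed_interp \<omega> (ts j) i + a i j"
        using step[OF i j] by simp
    qed
  qed
qed

text \<open>In \<open>g \<in> cell_assignments a\<close>, \<open>g i ! l\<close> is the grid cell prescribed for the uniform
  \<open>\<zeta> i l\<close>; the increments \<open>a\<close> fix only how many uniforms of each component fall into each
  cell, so \<open>g i\<close> ranges over the arrangements of that multiset.\<close>
definition "cell_assignments a = PiE {..<m} (\<lambda>i. permutations_of_multiset (mset_of_counts r (a i)))"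

definition "cell_event g = {\<omega>\<in>space P0. \<forall>i<m. \<forall>l<k i.
    grid_fraction i (g i ! l) < \<zeta> i l \<omega> \<and> \<zeta> i l \<omega> \<le> grid_fraction i (Suc (g i ! l))}"

definition "cell_prob g = (\<Prod>i<m. \<Prod>l<k i. grid_fraction i (Suc (g i ! l)) - grid_fraction i (g i ! l))"

lemma cell_assignments_mset:
  "g \<in> cell_assignments a \<Longrightarrow> i < m \<Longrightarrow> mset (g i) = mset_of_counts r (a i)"
  unfolding cell_assignments_def by (auto dest: permutations_of_multisetD)

lemma cell_assignments_length:
  assumes "g \<in> cell_assignments a" "a \<in> increment_arrays m r k" "i < m"
  shows "length (g i) = k i"
  using size_mset[of "g i"] cell_assignments_mset[OF assms(1,3)] assms(2,3)
  by (simp add: size_mset_of_counts increment_arrays_def)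

lemma cell_assignments_less:
  assumes "g \<in> cell_assignments a" "a \<in> increment_arrays m r k" "i < m" "l < k i"
  shows "g i ! l < r"
proof -
  have "g i ! l \<in># mset (g i)"
    using cell_assignments_length[OF assms(1-3)] assms(4) by simp
  then show ?thesis
    using cell_assignments_mset[OF assms(1,3)] set_mset_of_counts by auto
qed

lemma cell_event_cell_list:
  assumes g: "g \<in> cell_assignments a" and a: "a \<in> increment_arrays m r k" and \<omega>: "\<omega> \<in> cell_event g"
  shows "\<omega> \<in> unit_zetas" and "i < m \<Longrightarrow> cell_list i \<omega> = g i"
proof -
  have bounds: "grid_fraction i (g i ! l) < \<zeta> i l \<omega> \<and> \<zeta> i l \<omega> \<le> grid_fraction i (Suc (g i ! l))"
    if "i < m" "l < k i" for i l
    using \<omega> that unfolding cell_event_def by auto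
  have "0 < \<zeta> i l \<omega> \<and> \<zeta> i l \<omega> \<le> 1" if "i < m" "l < k i" for i l
    using bounds[OF that] grid_fraction_in_unit[OF that(1), of "g i ! l"]
      grid_fraction_in_unit[OF that(1), of "Suc (g i ! l)"] cell_assignments_less[OF g a that]
    by auto
  then show "\<omega> \<in> unit_zetas"
    using \<omega> unfolding unit_zetas_def cell_event_def by auto
  show "cell_list i \<omega> = g i" if i: "i < m"
  proof (rule nth_equalityI)
    show "length (cell_list i \<omega>) = length (g i)"
      unfolding cell_list_def using cell_assignments_length[OF g a i] by simp
    fix l assume "l < length (cell_list i \<omega>)"
    then have l: "l < k i" unfolding cell_list_def by simp
    show "cell_list i \<omega> ! l = g i ! l"
      unfolding cell_list_def using l cell_eqI[OF i cell_assignments_less[OF g a i l] bounds[OF i l, THEN conjunct1] bounds[OF i l, THEN conjunct2]]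
      by simp
  qed
qed

lemma unit_zetas_grid_increments_eq:
  assumes a: "a \<in> increment_arrays m r k"
  shows "unit_zetas \<inter> {\<omega>\<in>space P0. has_grid_increments m r ts (fixed_interp \<omega>) a}
       = (\<Union>g\<in>cell_assignments a. cell_event g)"
proof (intro set_eqI iffI)
  fix \<omega> assume "\<omega> \<in> unit_zetas \<inter> {\<omega>\<in>space P0. has_grid_increments m r ts (fixed_interp \<omega>) a}"
  then have \<omega>: "\<omega> \<in> unit_zetas" "\<omega> \<in> space P0"
    and cells: "\<forall>i<m. mset (cell_list i \<omega>) = mset_of_counts r (a i)"
    using fixed_interp_increments_iff by (auto simp: unit_zetas_def)
  define g where "g = (\<lambda>i\<in>{..<m}. cell_list i \<omega>)"
  have "g \<in> cell_assignments a"
    unfolding cell_assignments_def g_def using cells by (auto intro: permutations_of_multisetI)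
  moreover have "\<omega> \<in> cell_event g"
    unfolding cell_event_def g_def cell_list_def
    using \<omega> cell_bounds(2,3) unit_zetasD[OF \<omega>(1)] by auto
  ultimately show "\<omega> \<in> (\<Union>g\<in>cell_assignments a. cell_event g)" by blast
next
  fix \<omega> assume "\<omega> \<in> (\<Union>g\<in>cell_assignments a. cell_event g)"
  then obtain g where g: "g \<in> cell_assignments a" and \<omega>: "\<omega> \<in> cell_event g" by blast
  have "\<omega> \<in> unit_zetas" "\<omega> \<in> space P0"
    using cell_event_cell_list(1)[OF g a \<omega>] \<omega> by (auto simp: cell_event_def)
  moreover have "\<forall>i<m. mset (cell_list i \<omega>) = mset_of_counts r (a i)"
    using cell_event_cell_list(2)[OF g a \<omega>] cell_assignments_mset[OF g] by simp
  ultimately show "\<omega> \<in> unit_zetas \<inter> {\<omega>\<in>space P0. has_grid_increments m r ts (fixed_interp \<omega>) a}"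
    using fixed_interp_increments_iff by auto
qed

lemma disjoint_family_cell_event:
  assumes a: "a \<in> increment_arrays m r k"
  shows "disjoint_family_on cell_event (cell_assignments a)"
  unfolding disjoint_family_on_def
proof (intro ballI impI)
  fix g g' assume g: "g \<in> cell_assignments a" and g': "g' \<in> cell_assignments a" and "g \<noteq> g'"
  then have "\<omega> \<notin> cell_event g'" if "\<omega> \<in> cell_event g" for \<omega>
    using cell_event_cell_list(2)[OF g a that] cell_event_cell_list(2)[OF g' a]
      PiE_ext[of g "{..<m}" _ g'] unfolding cell_assignments_def by auto
  then show "cell_event g \<inter> cell_event g' = {}" by blast
qed

lemma cell_event_in_sets: "cell_event g \<in> sets P0"
proof -
  have "{\<omega>\<in>space P0. l < k i \<longrightarrow>
      grid_fraction i (g i ! l) < \<zeta> i l \<omega> \<and> \<zeta> i l \<omega> \<le> grid_fraction i (Suc (g i ! l))} \<in> sets P0" for i l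
    using src_sigma_in_sets[OF zeta_interval_in_unif] by (intro sets.sets_Collect_imp sets.sets_Collect_const)
  then have "{\<omega>\<in>space P0. i < m \<longrightarrow> (\<forall>l<k i.
      grid_fraction i (g i ! l) < \<zeta> i l \<omega> \<and> \<zeta> i l \<omega> \<le> grid_fraction i (Suc (g i ! l)))} \<in> sets P0" for i
    by (rule sets.sets_Collect_imp[OF sets.sets_Collect_countable_All sets.sets_Collect_const])
  then show ?thesis
    unfolding cell_event_def by (intro sets.sets_Collect_countable_All)
qed

definition "cell_interval g i l = {\<omega>\<in>space P0.
    grid_fraction i (g i ! l) < \<zeta> i l \<omega> \<and> \<zeta> i l \<omega> \<le> grid_fraction i (Suc (g i ! l))}"

lemma cell_event_eq_INT: "cell_event g = space P0 \<inter> (\<Inter>(i, l)\<in>(SIGMA i:{..<m}. {..<k i}). cell_interval g i l)"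
  unfolding cell_event_def cell_interval_def by auto

lemma prod_measure_cell_interval:
  assumes g: "g \<in> cell_assignments a" and a: "a \<in> increment_arrays m r k"
  shows "(\<Prod>(i, l)\<in>(SIGMA i:{..<m}. {..<k i}). measure (uniform_measure P0 Op) (cell_interval g i l)) = cell_prob g"
proof -
  have "measure (uniform_measure P0 Op) (cell_interval g i l)
      = grid_fraction i (Suc (g i ! l)) - grid_fraction i (g i ! l)" if "i < m" "l < k i" for i l
    unfolding cell_interval_def
    using grid_fraction_in_unit[OF that(1)] cell_assignments_less[OF g a that]
      grid_fraction_mono[OF that(1), of "g i ! l" "Suc (g i ! l)"]
    by (intro measure_uniform_Op_zeta_interval) auto
  then have "(\<Prod>(i, l)\<in>(SIGMA i:{..<m}. {..<k i}). measure (uniform_measure P0 Op) (cell_interval g i l))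
      = (\<Prod>(i, l)\<in>(SIGMA i:{..<m}. {..<k i}). grid_fraction i (Suc (g i ! l)) - grid_fraction i (g i ! l))"
    by (intro prod.cong) auto
  also have "\<dots> = cell_prob g"
    unfolding cell_prob_def by (subst prod.Sigma) auto
  finally show ?thesis .
qed

lemma measure_selected_at_cell_event:
  assumes g: "g \<in> cell_assignments a" and a: "a \<in> increment_arrays m r k"
  shows "measure P0 (selected_at n \<inter> cell_event g) = measure P0 (selected_at n) * cell_prob g"
proof -
  let ?U = "uniform_measure P0 Op" and ?F = "obs \<inter> (\<Inter>j\<le>n. selection_factor n j)"
  have obs_space: "obs \<subseteq> space P0" unfolding obs_event_def by auto
  have F: "?F \<in> sets P0"
    using src_sigma_in_sets[OF obs_event_in_lab] src_sigma_in_sets[OF selection_factor_in_filt] by auto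
  have cells: "?F \<inter> (\<Inter>(i, l)\<in>(SIGMA i:{..<m}. {..<k i}). cell_interval g i l) = ?F \<inter> cell_event g"
    unfolding cell_event_eq_INT using obs_space by blast
  have "cell_interval g i l \<in> src (Unif i l)" for i l
    unfolding cell_interval_def by (rule zeta_interval_in_unif)
  then have indep: "measure ?U (?F \<inter> (\<Inter>(i, l)\<in>(SIGMA i:{..<m}. {..<k i}). cell_interval g i l))
      = measure ?U ?F * cell_prob g"
    using measure_lab_filter_unif_indep[where n=n and S="SIGMA i:{..<m}. {..<k i}" and V="cell_interval g",
        OF obs_event_in_lab selection_factor_in_filt[where n=n]] prod_measure_cell_interval[OF g a]
    by simp
  have "measure P0 (selected_at n \<inter> cell_event g) = measure P0 Op * measure ?U (?F \<inter> cell_event g)"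
    unfolding selected_at_eq_INT measure_uniform_Op[OF sets.Int[OF F cell_event_in_sets]]
    using Op_pos by (simp add: Int_assoc)
  also have "\<dots> = measure P0 Op * measure ?U ?F * cell_prob g"
    using indep unfolding cells by simp
  also have "measure P0 Op * measure ?U ?F = measure P0 (selected_at n)"
    unfolding selected_at_eq_INT measure_uniform_Op[OF F] using Op_pos by simp
  finally show ?thesis .
qed

lemma finite_cell_assignments: "finite (cell_assignments a)"
  unfolding cell_assignments_def by (intro finite_PiE) auto

lemma measure_core_grid_increments:
  assumes a: "a \<in> increment_arrays m r k"
  shows "measure P0 (filter_core \<inter> {\<omega>\<in>space P0. has_grid_increments m r ts (fixed_interp \<omega>) a})
       = measure P0 selected * (\<Sum>g\<in>cell_assignments a. cell_prob g)"
proof -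
  define X where "X = (\<Union>g\<in>cell_assignments a. cell_event g)"
  have X: "X \<in> sets P0"
    unfolding X_def using finite_cell_assignments cell_event_in_sets by auto
  have "measure P0 (selected_at n \<inter> X) = (\<Sum>g\<in>cell_assignments a. measure P0 (selected_at n \<inter> cell_event g))"
    for n
  proof -
    have "disjoint_family_on (\<lambda>g. selected_at n \<inter> cell_event g) (cell_assignments a)"
      using disjoint_family_cell_event[OF a] unfolding disjoint_family_on_def by blast
    then show ?thesis
      unfolding X_def Int_UN_distrib using selected_at_in_sets cell_event_in_sets
      by (intro finite_measure_finite_Union finite_cell_assignments) auto
  qed
  then have selected_at_X: "measure P0 (selected_at n \<inter> X) = measure P0 (selected_at n) * (\<Sum>g\<in>cell_assignments a. cell_prob g)"
    for n
    using measure_selected_at_cell_event[OF _ a] by (simp add: sum_distrib_left)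
  have "disjoint_family (\<lambda>n. selected_at n \<inter> X)"
    using disjoint_family_selected_at unfolding disjoint_family_on_def by blast
  then have "(\<lambda>n. measure P0 (selected_at n \<inter> X)) sums measure P0 (\<Union>n. selected_at n \<inter> X)"
    using selected_at_in_sets X by (intro measure_UNION) auto
  moreover have "(\<Union>n. selected_at n \<inter> X) = selected \<inter> X"
    unfolding selected_def by blast
  ultimately have sums_X: "(\<lambda>n. measure P0 (selected_at n \<inter> X)) sums measure P0 (selected \<inter> X)"
    by simp
  have "(\<lambda>n. measure P0 (selected_at n)) sums measure P0 selected"
    unfolding selected_def using selected_at_in_sets disjoint_family_selected_at
    by (intro measure_UNION) auto
  then have "measure P0 (selected \<inter> X) = measure P0 selected * (\<Sum>g\<in>cell_assignments a. cell_prob g)"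
    using sums_unique2[OF sums_X[unfolded selected_at_X] sums_mult2] by blast
  moreover have "filter_core \<inter> {\<omega>\<in>space P0. has_grid_increments m r ts (fixed_interp \<omega>) a} = selected \<inter> X"
    unfolding filter_core_def X_def unit_zetas_grid_increments_eq[OF a, symmetric] by auto
  ultimately show ?thesis by simp
qed

lemma sum_cell_prob:
  assumes a: "a \<in> increment_arrays m r k"
  shows "(\<Sum>g\<in>cell_assignments a. cell_prob g)
       = (\<Prod>i<m. real (card (permutations_of_multiset (mset_of_counts r (a i))))
            * (\<Prod>j<r. (grid_fraction i (Suc j) - grid_fraction i j) ^ a i j))"
proof -
  have "(\<Sum>g\<in>cell_assignments a. cell_prob g)
      = (\<Prod>i<m. \<Sum>xs\<in>permutations_of_multiset (mset_of_counts r (a i)).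
            \<Prod>l<k i. grid_fraction i (Suc (xs ! l)) - grid_fraction i (xs ! l))"
    unfolding cell_assignments_def cell_prob_def by (rule prod_sum_PiE[symmetric]) auto
  also have "\<dots> = (\<Prod>i<m. real (card (permutations_of_multiset (mset_of_counts r (a i))))
            * (\<Prod>j<r. (grid_fraction i (Suc j) - grid_fraction i j) ^ a i j))"
  proof (intro prod.cong refl)
    fix i assume "i \<in> {..<m}"
    then have k: "k i = size (mset_of_counts r (a i))"
      using a by (simp add: size_mset_of_counts increment_arrays_def)
    have "(\<Sum>xs\<in>permutations_of_multiset (mset_of_counts r (a i)).
            \<Prod>l<k i. grid_fraction i (Suc (xs ! l)) - grid_fraction i (xs ! l))
        = (\<Sum>xs\<in>permutations_of_multiset (mset_of_counts r (a i)).
            \<Prod>l<length xs. grid_fraction i (Suc (xs ! l)) - grid_fraction i (xs ! l))"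
      unfolding k by (intro sum.cong refl) (metis permutations_of_multisetD size_mset)
    also have "\<dots> = real (card (permutations_of_multiset (mset_of_counts r (a i))))
        * (\<Prod>j<r. (grid_fraction i (Suc j) - grid_fraction i j) ^ a i j)"
      using sum_permutations_of_multiset_prod_nth[OF set_mset_of_counts]
      by (simp add: count_mset_of_counts)
    finally show "(\<Sum>xs\<in>permutations_of_multiset (mset_of_counts r (a i)).
            \<Prod>l<k i. grid_fraction i (Suc (xs ! l)) - grid_fraction i (xs ! l))
        = real (card (permutations_of_multiset (mset_of_counts r (a i))))
          * (\<Prod>j<r. (grid_fraction i (Suc j) - grid_fraction i j) ^ a i j)" .
  qed
  finally show ?thesis .
qed

text \<open>Per coordinate, the Poisson probability of the grid increments given the total is the
  multinomial probability of the cells in which the uniforms fall.\<close>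
lemma poisson_grid_row_ratio:
  assumes i: "i < m" and a: "(\<Sum>j<r. a j) = k i"
  shows "(\<Prod>j<r. poisson_prob (\<eta> i (ts (Suc j)) - \<eta> i (ts j)) (a j)) / poisson_prob (\<eta> i T) (k i)
       = real (card (permutations_of_multiset (mset_of_counts r a)))
         * (\<Prod>j<r. (grid_fraction i (Suc j) - grid_fraction i j) ^ a j)"
proof -
  let ?L = "\<lambda>j. \<eta> i (ts (Suc j)) - \<eta> i (ts j)"
  have sum_L: "(\<Sum>j<r. ?L j) = \<eta> i T"
    using sum_lessThan_telescope[of "\<lambda>j. \<eta> i (ts j)" r] ts_0 ts_r eta_0 by simp
  have "(\<Prod>j<r. poisson_prob (?L j) (a j)) / poisson_prob (\<Sum>j<r. ?L j) (\<Sum>j<r. a j)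
      = fact (\<Sum>j<r. a j) / (\<Prod>j<r. fact (a j)) * (\<Prod>j<r. (?L j / (\<Sum>j<r. ?L j)) ^ a j)"
    using eta_T_pos[OF i] sum_L by (intro poisson_prob_prod_div_sum) simp
  moreover have "fact (\<Sum>j<r. a j) / (\<Prod>j<r. fact (a j)) = real (card (permutations_of_multiset (mset_of_counts r a)))"
    using real_card_permutations_of_multiset[OF set_mset_of_counts, of r a]
    by (simp add: size_mset_of_counts count_mset_of_counts)
  moreover have "?L j / (\<Sum>j<r. ?L j) = grid_fraction i (Suc j) - grid_fraction i j" for j
    unfolding sum_L grid_fraction_def by (simp add: diff_divide_distrib)
  ultimately show ?thesis
    unfolding sum_L a by simp
qed

lemma sum_cell_prob_eq_poisson_ratio:
  assumes a: "a \<in> increment_arrays m r k"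
  shows "(\<Sum>g\<in>cell_assignments a. cell_prob g) = poisson_grid_prob r ts a / (\<Prod>i<m. poisson_prob (\<eta> i T) (k i))"
  unfolding sum_cell_prob[OF a] poisson_grid_prob_def prod_dividef[symmetric]
  using a poisson_grid_row_ratio[of _ "a _"] by (intro prod.cong refl) (simp add: increment_arrays_def)

lemma measure_lab_event_cylinder:
  assumes J: "J \<subseteq> ts ` {..r}"
  shows "measure P0 (lab_event \<inter> {\<omega>\<in>space P0. \<forall>t\<in>J. real_vec m (R \<omega> t) \<in> A t})
       = (\<Sum>a\<in>admissible_increments m r k ts J A. measure P0 start_event * poisson_grid_prob r ts a)"
  using measure_cylinder_eq_sum_grid_increments[OF lab_event_in_sets
      sets_has_grid_increments[where X=R and r=r and ts=ts, OF R_measurable[OF ts_in_interval]]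
      lab_event_monotone_grid_path[OF ts_0 ts_r ts_mono] J]
    measure_lab_event_grid_increments[OF ts_0 ts_r ts_mono]
  by (simp add: admissible_increments_def increment_arrays_def)

lemma measure_filter_core_cylinder:
  assumes J: "J \<subseteq> ts ` {..r}"
  shows "measure P0 (filter_core \<inter> {\<omega>\<in>space P0. \<forall>t\<in>J. real_vec m (fixed_interp \<omega> t) \<in> A t})
       = (\<Sum>a\<in>admissible_increments m r k ts J A.
            measure P0 selected * (\<Sum>g\<in>cell_assignments a. cell_prob g))"
  using measure_cylinder_eq_sum_grid_increments[OF filter_core_in_sets
      sets_has_grid_increments[where X=fixed_interp and r=r and ts=ts, OF fixed_interp_measurable]
      fixed_interp_monotone_grid_path J]
    measure_core_grid_increments
  by (simp add: filter_core_def admissible_increments_def)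

lemma cylinder_ratio_eq:
  assumes J: "J \<subseteq> ts ` {..r}"
  shows "measure P0 (lab_event \<inter> {\<omega>\<in>space P0. \<forall>t\<in>J. real_vec m (R \<omega> t) \<in> A t}) / measure P0 lab_event
       = measure P0 (filter_core \<inter> {\<omega>\<in>space P0. \<forall>t\<in>J. real_vec m (fixed_interp \<omega> t) \<in> A t})
         / measure P0 filter_core"
proof -
  let ?Adm = "admissible_increments m r k ts J A" and ?PK = "\<Prod>i<m. poisson_prob (\<eta> i T) (k i)"
  have "0 < measure P0 start_event * ?PK"
    using measure_lab_event_pos unfolding measure_lab_event .
  then have start_PK: "measure P0 start_event \<noteq> 0" "?PK \<noteq> 0"
    by (metis mult_zero_left less_irrefl, metis mult_zero_right less_irrefl)
  have selected: "measure P0 selected \<noteq> 0"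
    using measure_filter_core_pos measure_selected_eq_core by simp
  have "measure P0 (lab_event \<inter> {\<omega>\<in>space P0. \<forall>t\<in>J. real_vec m (R \<omega> t) \<in> A t}) / measure P0 lab_event
      = (\<Sum>a\<in>?Adm. poisson_grid_prob r ts a / ?PK)"
    unfolding measure_lab_event_cylinder[OF J] measure_lab_event using start_PK
    by (simp add: sum_distrib_left[symmetric] sum_divide_distrib[symmetric])
  also have "\<dots> = (\<Sum>a\<in>?Adm. \<Sum>g\<in>cell_assignments a. cell_prob g)"
    using sum_cell_prob_eq_poisson_ratio by (simp add: admissible_increments_def)
  also have "\<dots> = measure P0 (filter_core \<inter> {\<omega>\<in>space P0. \<forall>t\<in>J. real_vec m (fixed_interp \<omega> t) \<in> A t})
      / measure P0 filter_core"
    unfolding measure_filter_core_cylinder[OF J] measure_selected_eq_core[symmetric] using selected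
    by (simp add: sum_distrib_left[symmetric])
  finally show ?thesis .
qed

end

context conditioned_lab_filter_model
begin

lemma cylinder_ratio_lab_eq_core:
  assumes "finite J" "J \<subseteq> {0..T}"
  shows "measure P0 (lab_event \<inter> {\<omega>\<in>space P0. \<forall>t\<in>J. real_vec m (R \<omega> t) \<in> A t}) / measure P0 lab_event
       = measure P0 (filter_core \<inter> {\<omega>\<in>space P0. \<forall>t\<in>J. real_vec m (fixed_interp \<omega> t) \<in> A t})
         / measure P0 filter_core"
proof -
  obtain ts r where grid: "ts 0 = 0" "ts r = T" "\<And>j. j < r \<Longrightarrow> ts j < ts (Suc j)" "J \<subseteq> ts ` {..r}"
    using grid_through_finite_set[OF T_pos assms] by metis
  have "conditioned_grid P0 n1 n2 m1 m2 T y \<nu> lam Z0 R Op Zf Kp \<zeta> k z0 r ts"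
    using conditioned_lab_filter_model_axioms lab_filter_model_axioms prob_space_axioms grid(1-3)
    by (simp add: conditioned_grid_def conditioned_grid_axioms_def conditioned_lab_filter_model_def
        lab_filter_model_def)
  then interpret grid: conditioned_grid P0 n1 n2 m1 m2 T y \<nu> lam Z0 R Op Zf Kp \<zeta> k z0 r ts .
  show ?thesis by (rule grid.cylinder_ratio_eq[OF grid(4)])
qed

lemma distr_lab_path_eq_core_path:
  "distr (uniform_measure P0 lab_event) (path_space m T) (\<lambda>\<omega>. as_path m T (R \<omega>))
   = distr (uniform_measure P0 filter_core) (path_space m T) (\<lambda>\<omega>. as_path m T (fixed_interp \<omega>))"
  by (rule distr_as_path_uniform_measure_eqI[OF prob_space_axioms lab_event_in_sets measure_lab_event_pos
        filter_core_in_sets measure_filter_core_pos R_measurable fixed_interp_measurable])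
     (simp_all add: cylinder_ratio_lab_eq_core)

lemma nn_integral_lab_path_eq_filter_path:
  assumes f: "f \<in> borel_measurable (path_space m T)"
  shows "(\<integral>\<^sup>+\<omega>. f (as_path m T (R \<omega>)) \<partial>uniform_measure P0 lab_event)
       = (\<integral>\<^sup>+\<omega>. f (as_path m T (interp \<omega>)) \<partial>uniform_measure P0 filter_event)"
proof -
  have lab_path: "(\<lambda>\<omega>. as_path m T (R \<omega>)) \<in> measurable (uniform_measure P0 lab_event) (path_space m T)"
    unfolding measurable_cong_sets[OF sets_uniform_measure refl] by (rule measurable_as_path[OF R_measurable])
  have core_path:
    "(\<lambda>\<omega>. as_path m T (fixed_interp \<omega>)) \<in> measurable (uniform_measure P0 filter_core) (path_space m T)"
    unfolding measurable_cong_sets[OF sets_uniform_measure refl]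
    by (rule measurable_as_path[OF fixed_interp_measurable])
  have "(\<integral>\<^sup>+\<omega>. f (as_path m T (R \<omega>)) \<partial>uniform_measure P0 lab_event)
      = (\<integral>\<^sup>+p. f p \<partial>distr (uniform_measure P0 lab_event) (path_space m T) (\<lambda>\<omega>. as_path m T (R \<omega>)))"
    by (rule nn_integral_distr[OF lab_path, symmetric]) (simp add: f)
  also have "\<dots> = (\<integral>\<^sup>+\<omega>. f (as_path m T (fixed_interp \<omega>)) \<partial>uniform_measure P0 filter_core)"
    unfolding distr_lab_path_eq_core_path by (rule nn_integral_distr[OF core_path]) (simp add: f)
  also have "\<dots> = (\<integral>\<^sup>+\<omega>. f (as_path m T (interp \<omega>)) \<partial>uniform_measure P0 filter_core)"
  proof (intro nn_integral_cong_AE AE_uniform_measureI[OF filter_core_in_sets] AE_I2 impI)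
    fix \<omega> assume "\<omega> \<in> filter_core"
    then have "as_path m T (fixed_interp \<omega>) = as_path m T (interp \<omega>)"
      unfolding as_path_def by (intro restrict_ext) (simp add: filter_core_interp)
    then show "f (as_path m T (fixed_interp \<omega>)) = f (as_path m T (interp \<omega>))" by simp
  qed
  also have "uniform_measure P0 filter_core = uniform_measure P0 filter_event"
    by (rule uniform_measure_cong_AE[OF filter_core_in_sets filter_event_in_sets])
       (use AE_filter_event_iff_core in auto)
  finally show ?thesis .
qed

end

theorem proposition3:
  fixes n1 n2 m1 m2 :: nat and T :: real and y :: "nat \<Rightarrow> nat"
    and \<nu> :: "nat \<Rightarrow> nat \<Rightarrow> int"
    and lam :: "real \<Rightarrow> (nat \<Rightarrow> nat) \<Rightarrow> (nat \<Rightarrow> nat) \<Rightarrow> nat \<Rightarrow> real"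
    and \<mu> :: "(nat \<Rightarrow> nat) pmf"
    and P0 :: "'a measure"
    and Z0 :: "'a \<Rightarrow> nat \<Rightarrow> nat" and R :: "'a \<Rightarrow> real \<Rightarrow> nat \<Rightarrow> nat" and Op :: "'a set"
    and Zf :: "nat \<Rightarrow> 'a \<Rightarrow> nat \<Rightarrow> nat" and Kp :: "nat \<Rightarrow> 'a \<Rightarrow> nat \<Rightarrow> nat"
    and \<zeta> :: "nat \<Rightarrow> nat \<Rightarrow> 'a \<Rightarrow> real"
    and \<phi> :: "(real \<Rightarrow> nat \<Rightarrow> real) \<Rightarrow> real"
    and k z0 :: "nat \<Rightarrow> nat"
  assumes dims: "n2 = m2"
    and T_pos: "T > 0"
    and y_vec: "y \<in> vecs n2"
    and B_inv: "block_invertible n1 m1 m2 \<nu>"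
    and lam_pos: "\<forall>t\<in>{0..T}. \<forall>z\<in>vecs (n1+n2). \<forall>yy\<in>vecs n2. \<forall>i<m1+m2. lam t z yy i > 0"
    and lam_int: "\<forall>z\<in>vecs (n1+n2). \<forall>yy\<in>vecs n2. \<forall>i<m1+m2.
                    set_integrable lborel {0..T} (\<lambda>t. lam t z yy i)"
    and mu_vec: "set_pmf \<mu> \<subseteq> vecs (n1+n2)"
    and P0: "prob_space P0"
    and lab_vals: "\<forall>\<omega>\<in>space P0. Z0 \<omega> \<in> vecs (n1+n2) \<and> counting_path (m1+m2) T (R \<omega>)"
    and Op_ev: "Op \<in> sets P0" and Op_pos: "measure P0 Op > 0"
    and Z0_law: "\<forall>z. measure P0 (Op \<inter> {\<omega>\<in>space P0. Z0 \<omega> = z}) = measure P0 Op * pmf \<mu> z"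
    and R_law: "\<forall>z\<in>vecs (n1+n2). cond_poisson_process P0 (Op \<inter> {\<omega>\<in>space P0. Z0 \<omega> = z}) R (m1+m2) T
                    (\<lambda>i t. lam t z y i)"
    and filt_vals: "\<forall>\<omega>\<in>space P0. \<forall>i. Zf i \<omega> \<in> vecs (n1+n2) \<and> Kp i \<omega> \<in> vecs m1"
    and filt_law: "\<forall>i z. \<forall>kk\<in>vecs m1.
        measure P0 (Op \<inter> {\<omega>\<in>space P0. Zf i \<omega> = z \<and> Kp i \<omega> = kk})
        = measure P0 Op * pmf \<mu> z * (\<Prod>j<m1. poisson_prob (LINT t:{0..T}|lborel. lam t z y j) (kk j))"
    and zeta_law: "\<forall>i l c. 0 \<le> c \<and> c \<le> 1 \<longrightarrow>
        measure P0 (Op \<inter> {\<omega>\<in>space P0. \<zeta> i l \<omega> \<le> c}) = measure P0 Op * c"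
    and indep: "prob_space.indep_sets (uniform_measure P0 Op) (src_sigma P0 Z0 R T Zf Kp \<zeta>) UNIV"
    and O_pos: "measure P0 (Op \<inter> obs_event P0 n1 n2 (m1+m2) \<nu> y Z0 R T) > 0"
    and phi_meas: "\<phi> \<in> borel_measurable (path_space (m1+m2) T)"
    and phi_nonneg: "\<forall>p\<in>space (path_space (m1+m2) T). 0 \<le> \<phi> p"
    and k_vec: "k \<in> vecs (m1+m2)" and z0_vec: "z0 \<in> vecs (n1+n2)"
    and condR_pos: "measure P0 ({\<omega>\<in>space P0. R \<omega> T = k \<and> Z0 \<omega> = z0}
                       \<inter> (Op \<inter> obs_event P0 n1 n2 (m1+m2) \<nu> y Z0 R T)) > 0"
    and condI_pos: "measure P0 ({\<omega>\<in>space P0. interp_I n1 m1 m2 \<nu> y T lam Zf Kp \<zeta> \<omega> T = k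
                                  \<and> Ztil0 n1 m1 m2 \<nu> y Zf Kp \<omega> = z0}
                       \<inter> (Op \<inter> obs_event P0 n1 n2 (m1+m2) \<nu> y Z0 R T)) > 0"
  shows "(\<integral>\<^sup>+\<omega>. ennreal (\<phi> (as_path (m1+m2) T (R \<omega>)))
            \<partial>uniform_measure P0 ({\<omega>\<in>space P0. R \<omega> T = k \<and> Z0 \<omega> = z0}
                       \<inter> (Op \<inter> obs_event P0 n1 n2 (m1+m2) \<nu> y Z0 R T)))
       = (\<integral>\<^sup>+\<omega>. ennreal (\<phi> (as_path (m1+m2) T (interp_I n1 m1 m2 \<nu> y T lam Zf Kp \<zeta> \<omega>)))
            \<partial>uniform_measure P0 ({\<omega>\<in>space P0. interp_I n1 m1 m2 \<nu> y T lam Zf Kp \<zeta> \<omega> T = k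
                                  \<and> Ztil0 n1 m1 m2 \<nu> y Zf Kp \<omega> = z0}
                       \<inter> (Op \<inter> obs_event P0 n1 n2 (m1+m2) \<nu> y Z0 R T)))"
proof -
  interpret conditioned_lab_filter_model P0 n1 n2 m1 m2 T y \<nu> lam Z0 R Op Zf Kp \<zeta> k z0
    by (intro conditioned_lab_filter_model.intro lab_filter_model.intro
        lab_filter_model_axioms.intro conditioned_lab_filter_model_axioms.intro) (fact assms)+
  have "(\<lambda>p. ennreal (\<phi> p)) \<in> borel_measurable (path_space m T)"
    using phi_meas by measurable
  then show ?thesis
    using nn_integral_lab_path_eq_filter_path unfolding lab_event_def filter_event_def by blast
qed

end
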